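(* For the DSF process on $K_{N+1}$ started with $m_0=m_0(N)$ empty vertices with $m_0(N)\to\infty$, the halting time $T_N$ and the last-step duration $t_N$ satisfy, for every integer $p\ge1$, $$\lim_{N\to\infty}\frac{\mathbb{E}[T_N\,t_N^p]}{N^{p+1}}=p!\,\frac{\pi^2}{6}+p\cdot p!,\qquad \lim_{N\to\infty}\frac{\mathbb{E}[T_N]\,\mathbb{E}[t_N^p]}{N^{p+1}}=p!\,\frac{\pi^2}{6}.$$ In particular $\mathbb{E}[T_Nt_N]/N^2\to\frac{\pi^2}{6}+1$, so $T_N$ and $t_N$ are positively correlated.
   Context: Dynamic space filling (DSF) on the complete graph $K_{N+1}$ (vertex set of size $N+1$, every two distinct vertices adjacent): there are $N+1$ particles distributed among the $N+1$ vertices. The particles at a vertex form a pile ordered by arrival time; a particle arriving at a vertex is placed on top of the pile. The bottom particle of each nonempty pile never moves. Every other particle independently jumps, at total rate $1$, to one of the $N$ other vertices chosen uniformly at random (rate $1/N$ to each). A vertex is empty if it holds no particle. The halting time $T_N$ is the first time at which every vertex holds exactly one particle; the duration $t_N$ of the last step is the length of the time interval during which exactly one vertex is empty. *)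

theory Defs
  imports "HOL-Probability.Probability"
begin

text \<open>Dynamic space filling on the complete graph K_(N+1).
  Vertices are 0..N, particles are 0..N.  A configuration maps each vertex
  to its pile, a list of particles with the top (most recently arrived)
  particle at the head and the bottom particle as the last element.\<close>

type_synonym dsf_config = "nat \<Rightarrow> nat list"

definition dsf_valid :: "nat \<Rightarrow> dsf_config \<Rightarrow> bool" where
  "dsf_valid N c \<longleftrightarrow>
     distinct (concat (map c [0..<N+1])) \<and> set (concat (map c [0..<N+1])) = {0..N}
     \<and> (\<forall>v>N. c v = [])"

definition dsf_empty_count :: "nat \<Rightarrow> dsf_config \<Rightarrow> nat" where
  "dsf_empty_count N c = card {v. v \<le> N \<and> c v = []}"

definition dsf_halted :: "nat \<Rightarrow> dsf_config \<Rightarrow> bool" where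
  "dsf_halted N c \<longleftrightarrow> (\<forall>v\<le>N. length (c v) = 1)"

text \<open>One ring of the clock of particle i with offset off (1 \<le> off \<le> N):
  if i is not the bottom particle of its pile at vertex v, it leaves its pile
  and is put on top of the pile at vertex (v + off) mod (N+1), a uniformly
  chosen other vertex when off is uniform on {1..N}.\<close>
definition dsf_step :: "nat \<Rightarrow> dsf_config \<Rightarrow> nat \<times> nat \<Rightarrow> dsf_config" where
  "dsf_step N c ch =
     (let i = fst ch; off = snd ch in
      if \<exists>v\<le>N. i \<in> set (c v) \<and> i \<noteq> last (c v) then
        (let v = (LEAST v. i \<in> set (c v));
             w = (v + off) mod (N + 1);
             c' = c(v := remove1 i (c v))
         in c'(w := i # c' w))
      else c)"

text \<open>Construction of the continuous-time process: each of the N+1 particles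
  carries an independent rate-1 Poisson clock; their superposition is a rate
  N+1 Poisson clock whose rings are marked by a uniformly chosen particle.
  The sample point omega gives, for the k-th ring, the exponential waiting
  time fst (omega k) since the previous ring and the mark
  snd (omega k) = (particle, offset of destination).\<close>
definition dsf_step_measure :: "nat \<Rightarrow> (real \<times> (nat \<times> nat)) measure" where
  "dsf_step_measure N =
     density lborel (exponential_density (real N + 1))
     \<Otimes>\<^sub>M measure_pmf (pmf_of_set ({0..N} \<times> {1..N}))"

definition dsf_space :: "nat \<Rightarrow> (nat \<Rightarrow> real \<times> (nat \<times> nat)) measure" where
  "dsf_space N = Pi\<^sub>M UNIV (\<lambda>_. dsf_step_measure N)"

text \<open>Configuration after k rings (i.e. during the k-th holding interval).\<close>
fun dsf_conf :: "nat \<Rightarrow> dsf_config \<Rightarrow> (nat \<Rightarrow> real \<times> (nat \<times> nat)) \<Rightarrow> nat \<Rightarrow> dsf_config" where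
  "dsf_conf N c \<omega> 0 = c"
| "dsf_conf N c \<omega> (Suc k) = dsf_step N (dsf_conf N c \<omega> k) (snd (\<omega> k))"

definition dsf_halt_index :: "nat \<Rightarrow> dsf_config \<Rightarrow> (nat \<Rightarrow> real \<times> (nat \<times> nat)) \<Rightarrow> nat" where
  "dsf_halt_index N c \<omega> = (LEAST k. dsf_halted N (dsf_conf N c \<omega> k))"

definition dsf_T :: "nat \<Rightarrow> dsf_config \<Rightarrow> (nat \<Rightarrow> real \<times> (nat \<times> nat)) \<Rightarrow> real" where
  "dsf_T N c \<omega> = (\<Sum>k<dsf_halt_index N c \<omega>. fst (\<omega> k))"

definition dsf_t :: "nat \<Rightarrow> dsf_config \<Rightarrow> (nat \<Rightarrow> real \<times> (nat \<times> nat)) \<Rightarrow> real" where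
  "dsf_t N c \<omega> = (\<Sum>k<dsf_halt_index N c \<omega>.
      if dsf_empty_count N (dsf_conf N c \<omega> k) = 1 then fst (\<omega> k) else 0)"

end

theory Submission
  imports Defs
begin

(* The number m of empty vertices is a Markov chain observed at the rings of a rate N+1
   Poisson clock: among the N(N+1) equally likely marks (particle, offset) exactly m^2,
   a movable particle sent to one of the m empty vertices, decrease m by one, and no mark
   increases it; the holding times are independent Exp(N+1) variables. Hence t is a
   geometric sum of Exp(N+1) variables with success probability 1/(N(N+1)), i.e. t is
   Exp(1/N) and E[t^p] = p! N^p, while T - t, the time spent with at least two empty
   vertices, is independent of t with mean N (1/2^2 + ... + 1/m^2). This gives
   E[T t^p] = N (1/2^2 + ... + 1/m^2) p! N^p + (p+1)! N^(p+1), and both limits follow from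
   the sum of 1/k^2 being pi^2/6.
   The moments are computed by first-step analysis of the functionals truncated after n rings:
   the truncated moments satisfy monotone recursions whose limits are the unique fixed points,
   and the truncations increase to T and t because the process halts almost surely. *)

section \<open>Configurations and one step of the process\<close>

definition dsf_particles :: "nat \<Rightarrow> dsf_config \<Rightarrow> nat multiset" where
  "dsf_particles N c = (\<Sum>v\<in>{0..N}. mset (c v))"

lemma dsf_valid_iff_particles:
  "dsf_valid N c \<longleftrightarrow> dsf_particles N c = mset_set {0..N} \<and> (\<forall>v>N. c v = [])"
proof -
  have concat: "mset (concat (map c [0..<N+1])) = dsf_particles N c"
    by (simp add: mset_concat dsf_particles_def comp_def interv_sum_list_conv_sum_set_nat
        atLeastLessThanSuc_atLeastAtMost del: upt_Suc)
  have upt: "mset [0..<N+1] = mset_set {0..N}" "set [0..<N+1] = {0..N}"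
    by (simp_all add: atLeastLessThanSuc_atLeastAtMost del: upt_Suc)
  have "distinct xs \<and> set xs = {0..N} \<longleftrightarrow> mset xs = mset_set {0..N}" for xs :: "nat list"
  proof
    assume "distinct xs \<and> set xs = {0..N}"
    then show "mset xs = mset_set {0..N}"
      using upt set_eq_iff_mset_eq_distinct[of xs "[0..<N+1]"] by simp
  next
    assume "mset xs = mset_set {0..N}"
    then show "distinct xs \<and> set xs = {0..N}"
      using upt by (metis distinct_upt mset_eq_imp_distinct_iff mset_eq_setD)
  qed
  then have "dsf_valid N c \<longleftrightarrow>
      mset (concat (map c [0..<N+1])) = mset_set {0..N} \<and> (\<forall>v>N. c v = [])"
    unfolding dsf_valid_def by blast
  then show ?thesis by (simp only: concat)
qed

lemma dsf_particles_fun_upd: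
  assumes "w \<le> N"
  shows "dsf_particles N (f(w := xs)) + mset (f w) = dsf_particles N f + mset xs"
proof -
  have "dsf_particles N g = mset (g w) + (\<Sum>u\<in>{0..N} - {w}. mset (g u))" for g
    unfolding dsf_particles_def using assms by (intro sum.remove) auto
  moreover have "(\<Sum>u\<in>{0..N} - {w}. mset ((f(w := xs)) u)) = (\<Sum>u\<in>{0..N} - {w}. mset (f u))"
    by (intro sum.cong) auto
  ultimately show ?thesis by (simp add: ac_simps)
qed

lemma mset_subseteq_dsf_particles:
  assumes "v \<le> N"
  shows "mset (c v) \<subseteq># dsf_particles N c"
  unfolding dsf_particles_def using assms by (simp add: sum.remove[of "{0..N}" v])

lemma mset_add_subseteq_dsf_particles:
  assumes "u \<le> N" "v \<le> N" "u \<noteq> v"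
  shows "mset (c u) + mset (c v) \<subseteq># dsf_particles N c"
proof -
  have "dsf_particles N c = mset (c u) + (mset (c v) + (\<Sum>x\<in>{0..N} - {u} - {v}. mset (c x)))"
    unfolding dsf_particles_def using assms
    by (simp add: sum.remove[of "{0..N}" u] sum.remove[of "{0..N} - {u}" v])
  then show ?thesis by (simp add: add.assoc[symmetric])
qed

lemma dsf_valid_outside: "dsf_valid N c \<Longrightarrow> N < v \<Longrightarrow> c v = []"
  by (simp add: dsf_valid_iff_particles)

lemma dsf_valid_vertex_le: "dsf_valid N c \<Longrightarrow> i \<in> set (c v) \<Longrightarrow> v \<le> N"
  using dsf_valid_outside not_le by fastforce

lemma dsf_valid_pile_subseteq:
  assumes "dsf_valid N c"
  shows "mset (c v) \<subseteq># mset_set {0..N}"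
  using assms mset_subseteq_dsf_particles[of v N c]
  by (cases "v \<le> N") (auto simp: dsf_valid_iff_particles)

lemma dsf_valid_particle_le: "dsf_valid N c \<Longrightarrow> i \<in> set (c v) \<Longrightarrow> i \<le> N"
  using set_mset_mono[OF dsf_valid_pile_subseteq] by fastforce

lemma dsf_valid_distinct: "dsf_valid N c \<Longrightarrow> distinct (c v)"
proof -
  assume "dsf_valid N c"
  then have "count (mset (c v)) i \<le> 1" for i
    using mset_subset_eq_count[OF dsf_valid_pile_subseteq] count_mset_set'[of "{0..N}" i]
    by (metis le_trans zero_le_one)
  then show ?thesis
    unfolding distinct_count_atmost_1 by (metis count_mset_0_iff le_antisym less_one not_le)
qed

lemma dsf_valid_vertex_unique:
  assumes "dsf_valid N c" "i \<in> set (c u)" "i \<in> set (c v)"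
  shows "u = v"
proof (rule ccontr)
  assume "u \<noteq> v"
  then have "count (mset (c u) + mset (c v)) i \<le> count (mset_set {0..N}) i"
    using assms mset_subset_eq_count[OF mset_add_subseteq_dsf_particles]
    by (metis dsf_valid_iff_particles dsf_valid_vertex_le)
  moreover have "1 \<le> count (mset (c u)) i" "1 \<le> count (mset (c v)) i"
    using assms(2,3) by (simp_all add: Suc_le_eq)
  moreover have "count (mset_set {0..N}) i \<le> 1" by (simp add: count_mset_set')
  ultimately show False by simp
qed

lemma dsf_valid_sum_length: "dsf_valid N c \<Longrightarrow> (\<Sum>v\<in>{0..N}. length (c v)) = N + 1"
proof -
  assume "dsf_valid N c"
  then have "size (dsf_particles N c) = N + 1" by (simp add: dsf_valid_iff_particles)
  then show ?thesis by (simp add: dsf_particles_def size_multiset_sum)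
qed

definition dsf_vertex_of :: "dsf_config \<Rightarrow> nat \<Rightarrow> nat" where
  "dsf_vertex_of c i = (LEAST v. i \<in> set (c v))"

definition dsf_movable :: "nat \<Rightarrow> dsf_config \<Rightarrow> nat \<Rightarrow> bool" where
  "dsf_movable N c i \<longleftrightarrow> (\<exists>v\<le>N. i \<in> set (c v) \<and> i \<noteq> last (c v))"

definition pile_move :: "dsf_config \<Rightarrow> nat \<Rightarrow> nat \<Rightarrow> nat \<Rightarrow> dsf_config" where
  "pile_move c i v w = (let c' = c(v := remove1 i (c v)) in c'(w := i # c' w))"

lemma dsf_vertex_of_eq: "dsf_valid N c \<Longrightarrow> i \<in> set (c v) \<Longrightarrow> dsf_vertex_of c i = v"
  unfolding dsf_vertex_of_def by (rule Least_equality) (auto dest: dsf_valid_vertex_unique)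

lemma dsf_step_not_movable: "\<not> dsf_movable N c i \<Longrightarrow> dsf_step N c (i, off) = c"
  unfolding dsf_step_def Let_def fst_conv snd_conv by (simp only: dsf_movable_def[symmetric] if_False)

lemma dsf_step_movable:
  assumes "dsf_valid N c" "i \<in> set (c v)" "i \<noteq> last (c v)"
  shows "dsf_step N c (i, off) = pile_move c i v ((v + off) mod (N + 1))"
proof -
  have "v \<le> N" using assms dsf_valid_vertex_le by blast
  moreover have "(LEAST v. i \<in> set (c v)) = v"
    using dsf_vertex_of_eq[OF assms(1,2)] by (simp add: dsf_vertex_of_def)
  ultimately show ?thesis
    using assms by (auto simp: dsf_step_def pile_move_def Let_def)
qed

lemma dsf_particles_pile_move:
  assumes "i \<in> set (c v)" "v \<le> N" "w \<le> N"
  shows "dsf_particles N (pile_move c i v w) = dsf_particles N c"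
proof -
  define c' where "c' = c(v := remove1 i (c v))"
  have "dsf_particles N c' + mset (c v) = dsf_particles N c + mset (remove1 i (c v))"
    using dsf_particles_fun_upd[OF assms(2)] by (simp add: c'_def)
  moreover have "mset (c v) = mset (remove1 i (c v)) + {#i#}"
    using assms(1) by simp
  ultimately have "(dsf_particles N c' + {#i#}) + mset (remove1 i (c v))
      = dsf_particles N c + mset (remove1 i (c v))"
    by (simp only: ac_simps)
  then have "dsf_particles N c' + {#i#} = dsf_particles N c"
    by (simp only: add_right_cancel)
  moreover have "dsf_particles N (pile_move c i v w) = dsf_particles N c' + {#i#}"
    using dsf_particles_fun_upd[OF assms(3), of c' "i # c' w"] by (simp add: pile_move_def c'_def)
  ultimately show ?thesis by simp
qed

lemma pile_move_other: "u \<noteq> v \<Longrightarrow> u \<noteq> w \<Longrightarrow> pile_move c i v w u = c u"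
  by (simp add: pile_move_def)

lemma pile_move_eq_Nil_iff:
  assumes "i \<in> set (c v)" "i \<noteq> last (c v)"
  shows "pile_move c i v w u = [] \<longleftrightarrow> u \<noteq> w \<and> c u = []"
proof -
  have "remove1 i (c v) \<noteq> []" "c v \<noteq> []"
    using assms by (cases "c v"; auto split: if_splits)+
  then show ?thesis by (auto simp: pile_move_def)
qed

lemma dsf_valid_step:
  assumes c: "dsf_valid N c"
  shows "dsf_valid N (dsf_step N c mk)"
proof (cases mk)
  case (Pair i off)
  show ?thesis
  proof (cases "dsf_movable N c i")
    case True
    then obtain v where v: "v \<le> N" "i \<in> set (c v)" "i \<noteq> last (c v)"
      unfolding dsf_movable_def by blast
    define w where "w = (v + off) mod (N + 1)"
    have "w \<le> N" by (simp add: w_def)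
    have "dsf_step N c (i, off) = pile_move c i v w"
      using dsf_step_movable[OF c v(2,3)] by (simp add: w_def)
    moreover have "pile_move c i v w u = []" if "N < u" for u
      using that v(1) \<open>w \<le> N\<close> c pile_move_other[of u v w c i] by (simp add: dsf_valid_outside)
    ultimately show ?thesis
      using c v dsf_particles_pile_move[of i c v N w, OF v(2,1) \<open>w \<le> N\<close>]
      by (simp add: Pair dsf_valid_iff_particles)
  qed (simp add: Pair c dsf_step_not_movable)
qed

lemma dsf_empty_count_step:
  assumes c: "dsf_valid N c"
  shows "dsf_empty_count N (dsf_step N c (i, off)) =
    (if dsf_movable N c i \<and> c ((dsf_vertex_of c i + off) mod (N + 1)) = []
     then dsf_empty_count N c - 1 else dsf_empty_count N c)"
proof (cases "dsf_movable N c i")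
  case True
  then obtain v where v: "v \<le> N" "i \<in> set (c v)" "i \<noteq> last (c v)"
    unfolding dsf_movable_def by blast
  define w where "w = (v + off) mod (N + 1)"
  have "{u. u \<le> N \<and> pile_move c i v w u = []} = {u. u \<le> N \<and> c u = []} - {w}"
    using pile_move_eq_Nil_iff[of i c v, OF v(2,3)] by auto
  moreover have "dsf_step N c (i, off) = pile_move c i v w"
    using dsf_step_movable[OF c v(2,3)] by (simp add: w_def)
  moreover have "w \<le> N" by (simp add: w_def)
  ultimately show ?thesis
    using True dsf_vertex_of_eq[OF c v(2)]
    by (simp add: dsf_empty_count_def w_def card_Diff_singleton_if)
qed (simp add: dsf_step_not_movable)

lemma dsf_empty_count_step_le:
  "dsf_valid N c \<Longrightarrow> dsf_empty_count N (dsf_step N c mk) \<le> dsf_empty_count N c"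
  by (cases mk) (simp add: dsf_empty_count_step)

lemma card_nonempty_add_empty_count:
  "card {v\<in>{0..N}. c v \<noteq> []} + dsf_empty_count N c = N + 1"
proof -
  have "card {v\<in>{0..N}. c v \<noteq> []} + card {v. v \<le> N \<and> c v = []}
      = card ({v\<in>{0..N}. c v \<noteq> []} \<union> {v. v \<le> N \<and> c v = []})"
    by (rule card_Un_disjoint[symmetric]) auto
  also have "{v\<in>{0..N}. c v \<noteq> []} \<union> {v. v \<le> N \<and> c v = []} = {0..N}" by auto
  finally show ?thesis unfolding dsf_empty_count_def by simp
qed

lemma dsf_valid_sum_length_minus_one:
  assumes "dsf_valid N c"
  shows "(\<Sum>v\<in>{0..N}. length (c v) - 1) = dsf_empty_count N c"
proof -
  have "card {v\<in>{0..N}. c v \<noteq> []} = (\<Sum>v\<in>{0..N}. if c v \<noteq> [] then 1 else 0)"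
    by (simp add: sum.inter_filter[symmetric])
  then have "(\<Sum>v\<in>{0..N}. length (c v) - 1) + card {v\<in>{0..N}. c v \<noteq> []}
      = (\<Sum>v\<in>{0..N}. (length (c v) - 1) + (if c v \<noteq> [] then 1 else 0))"
    by (simp add: sum.distrib)
  also have "\<dots> = (\<Sum>v\<in>{0..N}. length (c v))"
    by (rule sum.cong) auto
  finally show ?thesis
    using dsf_valid_sum_length[OF assms] card_nonempty_add_empty_count[of N c] by linarith
qed

lemma dsf_empty_count_le:
  assumes "dsf_valid N c"
  shows "dsf_empty_count N c \<le> N"
proof -
  have "\<not> (\<forall>v\<in>{0..N}. c v = [])"
  proof
    assume "\<forall>v\<in>{0..N}. c v = []"
    then have "(\<Sum>v\<in>{0..N}. length (c v)) = 0" by simp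
    then show False using dsf_valid_sum_length[OF assms] by simp
  qed
  then have "card {v\<in>{0..N}. c v \<noteq> []} \<noteq> 0" by auto
  then show ?thesis using card_nonempty_add_empty_count[of N c] by linarith
qed

lemma dsf_halted_iff_empty_count:
  assumes "dsf_valid N c"
  shows "dsf_halted N c \<longleftrightarrow> dsf_empty_count N c = 0"
proof
  assume "dsf_halted N c"
  then have "{v. v \<le> N \<and> c v = []} = {}" unfolding dsf_halted_def by fastforce
  then show "dsf_empty_count N c = 0" unfolding dsf_empty_count_def by simp
next
  assume em: "dsf_empty_count N c = 0"
  then have "c v \<noteq> []" if "v \<le> N" for v
    using that by (auto simp: dsf_empty_count_def)
  moreover have "length (c v) \<le> 1" if "v \<le> N" for v
    using that em dsf_valid_sum_length_minus_one[OF assms] by simp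
  ultimately show "dsf_halted N c"
    unfolding dsf_halted_def by (simp add: le_antisym Suc_le_eq)
qed

lemma card_dsf_movable:
  assumes c: "dsf_valid N c"
  shows "card {i. dsf_movable N c i} = dsf_empty_count N c"
proof -
  have "{i. dsf_movable N c i} = (\<Union>v\<in>{0..N}. set (c v) - {last (c v)})"
    unfolding dsf_movable_def by auto
  then have "card {i. dsf_movable N c i} = (\<Sum>v\<in>{0..N}. card (set (c v) - {last (c v)}))"
    by (auto intro!: card_UN_disjoint dest: dsf_valid_vertex_unique[OF c])
  also have "\<dots> = (\<Sum>v\<in>{0..N}. length (c v) - 1)"
  proof (intro sum.cong refl)
    fix v
    show "card (set (c v) - {last (c v)}) = length (c v) - 1"
      using dsf_valid_distinct[OF c, of v] by (cases "c v = []") (simp_all add: distinct_card)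
  qed
  finally show ?thesis using dsf_valid_sum_length_minus_one[OF c] by simp
qed

lemma shift_mod_image:
  fixes v N :: nat
  assumes "v \<le> N"
  shows "(\<lambda>off. (v + off) mod (N + 1)) ` {1..N} = {0..N} - {v}"
proof (intro equalityI subsetI)
  fix u assume "u \<in> (\<lambda>off. (v + off) mod (N + 1)) ` {1..N}"
  then obtain off where off: "off \<in> {1..N}" "u = (v + off) mod (N + 1)" by blast
  then have "u = (if v + off \<le> N then v + off else v + off - (N + 1))"
    using assms by (auto simp: le_mod_geq)
  then show "u \<in> {0..N} - {v}" using off(1) assms by auto
next
  fix u assume u: "u \<in> {0..N} - {v}"
  define off where "off = (if v < u then u - v else u + (N + 1) - v)"
  have "off \<in> {1..N}" using u assms by (auto simp: off_def)
  moreover have "(v + off) mod (N + 1) = u"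
  proof (cases "v < u")
    case False
    then have "v + off = u + (N + 1)" using u assms by (simp add: off_def)
    then show ?thesis using u by (simp only: mod_add_self2) simp
  qed (use u in \<open>simp add: off_def\<close>)
  ultimately show "u \<in> (\<lambda>off. (v + off) mod (N + 1)) ` {1..N}" by (metis image_eqI)
qed

lemma bij_betw_shift_mod:
  fixes v N :: nat
  assumes "v \<le> N"
  shows "bij_betw (\<lambda>off. (v + off) mod (N + 1)) {1..N} ({0..N} - {v})"
proof -
  have "card ({0..N} - {v}) = card {1..N}" using assms by simp
  then show ?thesis
    using shift_mod_image[OF assms] by (simp add: bij_betw_def eq_card_imp_inj_on)
qed

lemma card_offsets_to_empty:
  assumes "v \<le> N" "c v \<noteq> []"
  shows "card {off\<in>{1..N}. c ((v + off) mod (N + 1)) = []} = dsf_empty_count N c"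
proof -
  let ?f = "\<lambda>off. (v + off) mod (N + 1)"
  have "inj_on ?f {off\<in>{1..N}. c (?f off) = []}"
    using bij_betw_shift_mod[OF assms(1)] by (auto simp: bij_betw_def intro: inj_on_subset)
  then have "card {off\<in>{1..N}. c (?f off) = []} = card (?f ` {off\<in>{1..N}. c (?f off) = []})"
    by (simp add: card_image)
  also have "?f ` {off\<in>{1..N}. c (?f off) = []} = {u\<in>?f ` {1..N}. c u = []}"
    by auto
  also have "\<dots> = {u\<in>{0..N} - {v}. c u = []}"
    by (simp only: shift_mod_image[OF assms(1)])
  also have "{u\<in>{0..N} - {v}. c u = []} = {u. u \<le> N \<and> c u = []}"
    using assms(2) by auto
  finally show ?thesis by (simp add: dsf_empty_count_def)
qed

definition dsf_marks :: "nat \<Rightarrow> (nat \<times> nat) set" where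
  "dsf_marks N = {0..N} \<times> {1..N}"

definition mark_count :: "nat \<Rightarrow> real" where
  "mark_count N = real N * (real N + 1)"

lemma card_dsf_marks: "real (card (dsf_marks N)) = mark_count N"
  by (simp add: dsf_marks_def mark_count_def card_cartesian_product algebra_simps)

lemma dsf_marks_nonempty: "1 \<le> N \<Longrightarrow> dsf_marks N \<noteq> {}"
  by (auto simp: dsf_marks_def)

lemma finite_dsf_marks [simp]: "finite (dsf_marks N)"
  by (simp add: dsf_marks_def)

lemma mark_count_pos: "1 \<le> N \<Longrightarrow> 0 < mark_count N"
  by (simp add: mark_count_def)

definition dsf_filling_marks :: "nat \<Rightarrow> dsf_config \<Rightarrow> (nat \<times> nat) set" where
  "dsf_filling_marks N c = {(i, off). off \<in> {1..N} \<and> dsf_movable N c i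
     \<and> c ((dsf_vertex_of c i + off) mod (N + 1)) = []}"

lemma dsf_filling_marks_subset: "dsf_valid N c \<Longrightarrow> dsf_filling_marks N c \<subseteq> dsf_marks N"
  unfolding dsf_filling_marks_def dsf_movable_def dsf_marks_def by (auto dest: dsf_valid_particle_le)

lemma card_dsf_filling_marks:
  assumes c: "dsf_valid N c"
  shows "card (dsf_filling_marks N c) = (dsf_empty_count N c)\<^sup>2"
proof -
  let ?offs = "\<lambda>i. {off\<in>{1..N}. c ((dsf_vertex_of c i + off) mod (N + 1)) = []}"
  have "finite {i. dsf_movable N c i}"
    by (rule finite_subset[of _ "{0..N}"]) (auto simp: dsf_movable_def dest: dsf_valid_particle_le[OF c])
  moreover have "dsf_filling_marks N c = Sigma {i. dsf_movable N c i} ?offs"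
    unfolding dsf_filling_marks_def by auto
  moreover have "card (?offs i) = dsf_empty_count N c" if mov: "dsf_movable N c i" for i
  proof -
    obtain v where v: "v \<le> N" "i \<in> set (c v)"
      using mov unfolding dsf_movable_def by blast
    have "c v \<noteq> []" using v(2) by (metis empty_iff empty_set)
    then show ?thesis
      using card_offsets_to_empty[OF v(1)] dsf_vertex_of_eq[OF c v(2)] by simp
  qed
  ultimately show ?thesis
    using card_dsf_movable[OF c] by (simp add: card_SigmaI power2_eq_square)
qed

section \<open>Recursions for the moments\<close>

(* The i-th moment of the Exp(N+1) holding time between two rings. *)
definition hold_moment :: "nat \<Rightarrow> nat \<Rightarrow> real" where
  "hold_moment N i = fact i / (real N + 1) ^ i"

(* With m empty vertices, m^2 of the mark_count N equally likely marks fill an empty vertex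
   (card_dsf_filling_marks) and all others leave m unchanged, so mean_next N g m is the expected
   value of g at the number of empty vertices after one ring. *)
definition mean_next :: "nat \<Rightarrow> (nat \<Rightarrow> real) \<Rightarrow> nat \<Rightarrow> real" where
  "mean_next N g m = ((real m)\<^sup>2 * g (m - 1) + (mark_count N - (real m)\<^sup>2) * g m) / mark_count N"

lemma hold_moment_nonneg: "0 \<le> hold_moment N i"
  by (simp add: hold_moment_def)

lemma sq_le_mark_count:
  assumes "m \<le> N"
  shows "(real m)\<^sup>2 \<le> mark_count N"
proof -
  have "(real m)\<^sup>2 \<le> (real N)\<^sup>2" using assms by (simp add: power_mono)
  also have "\<dots> \<le> mark_count N" by (simp add: mark_count_def power2_eq_square algebra_simps)
  finally show ?thesis .
qed

lemma mean_next_nonneg: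
  "1 \<le> N \<Longrightarrow> m \<le> N \<Longrightarrow> 0 \<le> g (m - 1) \<Longrightarrow> 0 \<le> g m \<Longrightarrow> 0 \<le> mean_next N g m"
  unfolding mean_next_def using mark_count_pos[of N] sq_le_mark_count[of m N]
  by (intro divide_nonneg_pos add_nonneg_nonneg mult_nonneg_nonneg) auto

lemma mean_next_mono:
  "1 \<le> N \<Longrightarrow> m \<le> N \<Longrightarrow> g (m - 1) \<le> h (m - 1) \<Longrightarrow> g m \<le> h m \<Longrightarrow>
    mean_next N g m \<le> mean_next N h m"
  unfolding mean_next_def using mark_count_pos[of N] sq_le_mark_count[of m N]
  by (intro divide_right_mono add_mono mult_left_mono) auto

lemma mean_next_eq:
  assumes "1 \<le> N" "g (m - 1) = g m"
  shows "mean_next N g m = g m"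
proof -
  have "mark_count N \<noteq> 0" using mark_count_pos[OF assms(1)] by simp
  then show ?thesis unfolding mean_next_def assms(2) by (simp add: field_simps)
qed

lemma mean_next_add_const: "1 \<le> N \<Longrightarrow> mean_next N (\<lambda>m. b + g m) m = b + mean_next N g m"
  using mark_count_pos[of N] by (simp add: mean_next_def field_simps)

lemma mean_next_tendsto:
  assumes "(\<lambda>n. f n (m - 1)) \<longlonglongrightarrow> g (m - 1)" "(\<lambda>n. f n m) \<longlonglongrightarrow> g m"
  shows "(\<lambda>n. mean_next N (f n) m) \<longlonglongrightarrow> mean_next N g m"
  unfolding mean_next_def divide_inverse by (intro tendsto_intros assms)

(* The limit at m solves the same affine equation as F m, in which the value at m - 1 has
   the positive weight (real m)^2 / mark_count N; hence the solution is unique. *)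
lemma tendsto_mean_next_fixed_point:
  assumes N: "1 \<le> N" and m: "1 \<le> m"
    and conv: "convergent (\<lambda>n. f n m)"
    and prev: "(\<lambda>n. f n (m - 1)) \<longlonglongrightarrow> F (m - 1)"
    and rec: "\<And>n. f (Suc n) m = a n + mean_next N (f n) m"
    and a: "a \<longlonglongrightarrow> A"
    and fixed: "F m = A + mean_next N F m"
  shows "(\<lambda>n. f n m) \<longlonglongrightarrow> F m"
proof -
  obtain L where L: "(\<lambda>n. f n m) \<longlonglongrightarrow> L"
    using conv by (auto simp: convergent_def)
  have "(\<lambda>n. f n (m - 1)) \<longlonglongrightarrow> (F(m := L)) (m - 1)" "(\<lambda>n. f n m) \<longlonglongrightarrow> (F(m := L)) m"
    using prev L m by simp_all
  then have "(\<lambda>n. f (Suc n) m) \<longlonglongrightarrow> A + mean_next N (F(m := L)) m"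
    unfolding rec by (intro tendsto_add a mean_next_tendsto)
  then have "L = A + mean_next N (F(m := L)) m"
    using LIMSEQ_unique[OF LIMSEQ_Suc[OF L]] by blast
  moreover have "m - 1 \<noteq> m" using m by simp
  ultimately have "(real m)\<^sup>2 * (L - F m) / mark_count N = 0"
    using fixed mark_count_pos[OF N] by (simp add: mean_next_def field_simps)
  then have "L = F m"
    using m mark_count_pos[OF N] by simp
  then show ?thesis using L by simp
qed

(* First-step recursion for E[t^j]: with one empty vertex the holding time a of the current
   step is added to t, whence the binomial expansion of (a + t')^j. *)
definition t_moment_step :: "nat \<Rightarrow> (nat \<Rightarrow> nat \<Rightarrow> real) \<Rightarrow> nat \<Rightarrow> nat \<Rightarrow> real" where
  "t_moment_step N f j m =
     (if m = 0 then (if j = 0 then 1 else 0)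
      else if m = 1 then (\<Sum>i\<le>j. real (j choose i) * hold_moment N i * mean_next N (f (j - i)) 1)
      else mean_next N (f j) m)"

primrec t_moment_trunc :: "nat \<Rightarrow> nat \<Rightarrow> nat \<Rightarrow> nat \<Rightarrow> real" where
  "t_moment_trunc N 0 = (\<lambda>j m. if j = 0 then 1 else 0)"
| "t_moment_trunc N (Suc n) = t_moment_step N (t_moment_trunc N n)"

definition t_moment :: "nat \<Rightarrow> nat \<Rightarrow> nat \<Rightarrow> real" where
  "t_moment N j m = (if m = 0 then (if j = 0 then 1 else 0) else fact j * real N ^ j)"

lemma t_moment_step_one:
  "t_moment_step N f j 1 =
    (\<Sum>i\<in>{1..j}. real (j choose i) * hold_moment N i * mean_next N (f (j - i)) 1)
    + mean_next N (f j) 1"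
  by (simp add: t_moment_step_def atMost_atLeast0 sum.atLeast_Suc_atMost hold_moment_def)

lemma t_moment_step_nonneg:
  assumes "1 \<le> N" "m \<le> N" "\<And>j m. m \<le> N \<Longrightarrow> 0 \<le> f j m"
  shows "0 \<le> t_moment_step N f j m"
  using assms
  by (auto simp: t_moment_step_def
      intro!: sum_nonneg mult_nonneg_nonneg mean_next_nonneg hold_moment_nonneg)

lemma t_moment_step_mono:
  assumes "1 \<le> N" "m \<le> N" "\<And>j m. m \<le> N \<Longrightarrow> f j m \<le> g j m"
  shows "t_moment_step N f j m \<le> t_moment_step N g j m"
  using assms
  by (auto simp: t_moment_step_def
      intro!: sum_mono mult_left_mono mean_next_mono mult_nonneg_nonneg hold_moment_nonneg)

lemma geometric_sum_identity:
  fixes x :: real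
  assumes "x + 1 \<noteq> 0"
  shows "(x * (x + 1) - 1) * (\<Sum>i\<le>j. x ^ (j - i) / (x + 1) ^ i) + 1 / (x + 1) ^ j
    = x * (x + 1) * x ^ j"
proof (induction j)
  case (Suc j)
  let ?G = "\<lambda>j. \<Sum>i\<le>j. x ^ (j - i) / (x + 1) ^ i"
  let ?y = "(x + 1) ^ Suc j"
  have "?G (Suc j) = x * ?G j + 1 / ?y"
    by (simp add: sum_distrib_left Suc_diff_le mult.assoc)
  moreover have "(x * (x + 1) - 1) * (1 / ?y) + 1 / ?y = x * (x + 1) / ((x + 1) * (x + 1) ^ j)"
    by (simp add: add_divide_distrib[symmetric])
  moreover have "\<dots> = x / (x + 1) ^ j"
    using assms by simp
  ultimately have "(x * (x + 1) - 1) * ?G (Suc j) + 1 / ?y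
      = x * ((x * (x + 1) - 1) * ?G j + 1 / (x + 1) ^ j)"
    by (simp add: algebra_simps)
  then show ?case using Suc.IH by simp
qed simp

lemma t_moment_step_fixed:
  assumes N: "1 \<le> N"
  shows "t_moment_step N (t_moment N) j m = t_moment N j m"
proof -
  consider "m = 0" | "m = 1" | "2 \<le> m" by linarith
  then show ?thesis
  proof cases
    case 2
    let ?Q = "mark_count N" and ?x = "real N"
    have Q: "?Q = ?x * (?x + 1)" "?Q \<noteq> 0"
      using N by (simp_all add: mark_count_def)
    have summand: "real (j choose i) * hold_moment N i * mean_next N (t_moment N (j - i)) 1
      = fact j / ?Q * ((if i = j then 1 / (?x + 1) ^ j else 0) + (?Q - 1) * (?x ^ (j - i) / (?x + 1) ^ i))"
      if "i \<le> j" for i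
      using that Q(2)
      by (simp add: mean_next_def t_moment_def hold_moment_def binomial_fact field_simps)
    have "(\<Sum>i\<le>j. real (j choose i) * hold_moment N i * mean_next N (t_moment N (j - i)) 1)
      = (\<Sum>i\<le>j. fact j / ?Q * ((if i = j then 1 / (?x + 1) ^ j else 0)
          + (?Q - 1) * (?x ^ (j - i) / (?x + 1) ^ i)))"
      by (intro sum.cong refl summand) simp
    also have "\<dots> = fact j / ?Q * ((\<Sum>i\<le>j. if i = j then 1 / (?x + 1) ^ j else 0)
          + (\<Sum>i\<le>j. (?Q - 1) * (?x ^ (j - i) / (?x + 1) ^ i)))"
      by (simp only: sum_distrib_left[symmetric] sum.distrib)
    also have "\<dots> = fact j / ?Q * (1 / (?x + 1) ^ j + (?Q - 1) * (\<Sum>i\<le>j. ?x ^ (j - i) / (?x + 1) ^ i))"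
      by (simp add: sum_distrib_left)
    also have "1 / (?x + 1) ^ j + (?Q - 1) * (\<Sum>i\<le>j. ?x ^ (j - i) / (?x + 1) ^ i) = ?Q * ?x ^ j"
      using geometric_sum_identity[of ?x j] by (simp add: Q(1) add.commute)
    also have "fact j / ?Q * (?Q * ?x ^ j) = fact j * ?x ^ j"
      using Q(2) by simp
    also have "fact j * ?x ^ j = t_moment N j m"
      using 2 by (simp add: t_moment_def)
    finally show ?thesis using 2 by (simp add: t_moment_step_def)
  qed (auto simp: t_moment_step_def t_moment_def mean_next_eq[OF N])
qed

lemma t_moment_trunc_nonneg: "1 \<le> N \<Longrightarrow> m \<le> N \<Longrightarrow> 0 \<le> t_moment_trunc N n j m"
  by (induction n arbitrary: j m) (auto intro: t_moment_step_nonneg)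

lemma t_moment_trunc_le: "1 \<le> N \<Longrightarrow> m \<le> N \<Longrightarrow> t_moment_trunc N n j m \<le> t_moment N j m"
proof (induction n arbitrary: j m)
  case (Suc n)
  then show ?case
    using t_moment_step_mono[of N m "t_moment_trunc N n" "t_moment N" j] t_moment_step_fixed
    by simp
qed (simp add: t_moment_def)

lemma t_moment_trunc_mono:
  "1 \<le> N \<Longrightarrow> m \<le> N \<Longrightarrow> t_moment_trunc N n j m \<le> t_moment_trunc N (Suc n) j m"
proof (induction n arbitrary: j m)
  case 0
  show ?case
  proof (cases "j = 0")
    case True
    then show ?thesis using 0 by (simp add: t_moment_step_def mean_next_eq hold_moment_def)
  next
    case False
    then show ?thesis using t_moment_trunc_nonneg[OF 0, of 1 j] by simp
  qed
next
  case (Suc n)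
  then show ?case by (simp add: t_moment_step_mono)
qed

lemma t_moment_trunc_convergent:
  assumes "1 \<le> N" "m \<le> N"
  shows "convergent (\<lambda>n. t_moment_trunc N n j m)"
proof -
  have "incseq (\<lambda>n. t_moment_trunc N n j m)"
    using t_moment_trunc_mono[OF assms] by (simp add: incseq_SucI)
  then show ?thesis
    using incseq_convergent[where B = "t_moment N j m"] t_moment_trunc_le[OF assms]
    by (metis convergent_def)
qed

lemma t_moment_trunc_zero_empty: "t_moment_trunc N n j 0 = (if j = 0 then 1 else 0)"
  by (cases n) (simp_all add: t_moment_step_def)

lemma t_moment_trunc_tendsto_one:
  assumes N: "1 \<le> N"
    and smaller: "\<And>i m. i < j \<Longrightarrow> m \<le> 1 \<Longrightarrow> (\<lambda>n. t_moment_trunc N n i m) \<longlonglongrightarrow> t_moment N i m"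
  shows "(\<lambda>n. t_moment_trunc N n j 1) \<longlonglongrightarrow> t_moment N j 1"
proof -
  let ?a = "\<lambda>f. \<Sum>i\<in>{1..j}. real (j choose i) * hold_moment N i * mean_next N (f (j - i)) 1"
  have rec: "t_moment_trunc N (Suc n) j 1 = ?a (t_moment_trunc N n) + mean_next N (t_moment_trunc N n j) 1"
    for n
    by (simp only: t_moment_trunc.simps t_moment_step_one)
  have fixed: "t_moment N j 1 = ?a (t_moment N) + mean_next N (t_moment N j) 1"
    using t_moment_step_fixed[OF N, of j 1] by (simp only: t_moment_step_one)
  have "(\<lambda>n. ?a (t_moment_trunc N n)) \<longlonglongrightarrow> ?a (t_moment N)"
    by (intro tendsto_intros mean_next_tendsto smaller) auto
  moreover have "(\<lambda>n. t_moment_trunc N n j (1 - 1)) \<longlonglongrightarrow> t_moment N j (1 - 1)"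
    by (simp add: t_moment_trunc_zero_empty t_moment_def)
  ultimately show ?thesis
    using tendsto_mean_next_fixed_point[OF N _ t_moment_trunc_convergent[OF N N] _ rec _ fixed] by simp
qed

lemma t_moment_trunc_tendsto:
  assumes N: "1 \<le> N"
  shows "m \<le> N \<Longrightarrow> (\<lambda>n. t_moment_trunc N n j m) \<longlonglongrightarrow> t_moment N j m"
proof (induction j arbitrary: m rule: less_induct)
  case (less j)
  show ?case
    using less.prems
  proof (induction m)
    case 0
    show ?case by (simp add: t_moment_trunc_zero_empty t_moment_def)
  next
    case (Suc k)
    show ?case
    proof (cases "k = 0")
      case True
      have "(\<lambda>n. t_moment_trunc N n j 1) \<longlonglongrightarrow> t_moment N j 1"
        using N by (intro t_moment_trunc_tendsto_one[OF N] less.IH) auto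
      then show ?thesis using True by simp
    next
      case False
      have prev: "(\<lambda>n. t_moment_trunc N n j (Suc k - 1)) \<longlonglongrightarrow> t_moment N j (Suc k - 1)"
        using Suc by simp
      have rec: "t_moment_trunc N (Suc n) j (Suc k) = 0 + mean_next N (t_moment_trunc N n j) (Suc k)"
        for n
        using False by (simp add: t_moment_step_def)
      have fixed: "t_moment N j (Suc k) = 0 + mean_next N (t_moment N j) (Suc k)"
        using False t_moment_step_fixed[OF N, of j "Suc k"] by (simp add: t_moment_step_def)
      show ?thesis
        using tendsto_mean_next_fixed_point[OF N _ t_moment_trunc_convergent[OF N Suc.prems] prev rec _ fixed]
        by simp
    qed
  qed
qed

(* With one empty vertex, T coincides with t. *)
fun Tt_moment_trunc :: "nat \<Rightarrow> nat \<Rightarrow> nat \<Rightarrow> nat \<Rightarrow> real" where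
  "Tt_moment_trunc N 0 j m = 0"
| "Tt_moment_trunc N (Suc n) j m =
     (if m = 0 then 0
      else if m = 1 then t_moment_trunc N (Suc n) (Suc j) 1
      else hold_moment N 1 * mean_next N (t_moment_trunc N n j) m
        + mean_next N (Tt_moment_trunc N n j) m)"

(* E[T t^j] = E[T - t] E[t^j] + E[t^(j+1)] because T - t is independent of t, and
   E[T - t] = time_to_last_step N m: with k empty vertices the holding rate of the count is
   k^2 / N, so each level k >= 2 lasts N / k^2 on average. *)
definition time_to_last_step :: "nat \<Rightarrow> nat \<Rightarrow> real" where
  "time_to_last_step N m = real N * (\<Sum>k\<in>{2..m}. 1 / (real k)\<^sup>2)"

definition Tt_moment :: "nat \<Rightarrow> nat \<Rightarrow> nat \<Rightarrow> real" where
  "Tt_moment N j m = time_to_last_step N m * t_moment N j m + t_moment N (Suc j) m"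

lemma time_to_last_step_nonneg: "0 \<le> time_to_last_step N m"
  by (simp add: time_to_last_step_def sum_nonneg)

lemma mean_next_time_to_last_step:
  assumes N: "1 \<le> N" and m: "2 \<le> m"
  shows "mean_next N (time_to_last_step N) m = time_to_last_step N m - hold_moment N 1"
proof -
  have "time_to_last_step N m = time_to_last_step N (m - 1) + real N / (real m)\<^sup>2"
    using m by (cases m) (simp_all add: time_to_last_step_def sum.cl_ivl_Suc algebra_simps)
  then show ?thesis
    using m mark_count_pos[OF N]
    by (simp add: mean_next_def hold_moment_def mark_count_def field_simps)
qed

lemma Tt_moment_fixed:
  assumes N: "1 \<le> N" and m: "2 \<le> m"
  shows "Tt_moment N j m = hold_moment N 1 * t_moment N j m + mean_next N (Tt_moment N j) m"
proof -
  have "t_moment N i (m - 1) = t_moment N i m" for i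
    using m by (simp add: t_moment_def)
  then have "mean_next N (Tt_moment N j) m
      = mean_next N (time_to_last_step N) m * t_moment N j m + t_moment N (Suc j) m"
    using mark_count_pos[OF N] by (simp add: mean_next_def Tt_moment_def field_simps)
  then show ?thesis
    by (simp add: mean_next_time_to_last_step[OF N m] Tt_moment_def algebra_simps)
qed

lemma Tt_moment_trunc_one: "Tt_moment_trunc N n j 1 = t_moment_trunc N n (Suc j) 1"
  by (cases n) simp_all

lemma Tt_moment_trunc_nonneg: "1 \<le> N \<Longrightarrow> m \<le> N \<Longrightarrow> 0 \<le> Tt_moment_trunc N n j m"
proof (induction n arbitrary: m)
  case (Suc n)
  show ?case
  proof (cases "m = 1")
    case True
    show ?thesis
      unfolding True Tt_moment_trunc_one using Suc.prems True by (intro t_moment_trunc_nonneg) auto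
  next
    case False
    then show ?thesis
      using Suc t_moment_trunc_nonneg[OF Suc.prems(1)]
      by (auto intro!: add_nonneg_nonneg mult_nonneg_nonneg mean_next_nonneg hold_moment_nonneg)
  qed
qed simp

lemma Tt_moment_trunc_le:
  "1 \<le> N \<Longrightarrow> m \<le> N \<Longrightarrow> Tt_moment_trunc N n j m \<le> Tt_moment N j m"
proof (induction n arbitrary: m)
  case 0
  then show ?case by (simp add: Tt_moment_def t_moment_def time_to_last_step_nonneg)
next
  case (Suc n)
  note N = Suc.prems(1)
  consider "m = 0" | "m = 1" | "2 \<le> m" by linarith
  then show ?case
  proof cases
    case 2
    show ?thesis
      unfolding 2 Tt_moment_trunc_one
      using t_moment_trunc_le[OF N, of 1 "Suc n" "Suc j"] N
      by (simp add: Tt_moment_def time_to_last_step_def)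
  next
    case 3
    have "hold_moment N 1 * mean_next N (t_moment_trunc N n j) m + mean_next N (Tt_moment_trunc N n j) m
        \<le> hold_moment N 1 * mean_next N (t_moment N j) m + mean_next N (Tt_moment N j) m"
      using Suc N t_moment_trunc_le[OF N]
      by (intro add_mono mult_left_mono mean_next_mono hold_moment_nonneg) auto
    also have "\<dots> = Tt_moment N j m"
      using Tt_moment_fixed[OF N 3, of j] 3 N by (simp add: mean_next_eq t_moment_def)
    finally show ?thesis using 3 by simp
  qed (simp add: Tt_moment_def t_moment_def time_to_last_step_def)
qed

lemma Tt_moment_trunc_mono:
  "1 \<le> N \<Longrightarrow> m \<le> N \<Longrightarrow> Tt_moment_trunc N n j m \<le> Tt_moment_trunc N (Suc n) j m"
proof (induction n arbitrary: m)
  case 0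
  show ?case using Tt_moment_trunc_nonneg[OF 0] by (simp only: Tt_moment_trunc.simps(1))
next
  case (Suc n)
  note N = Suc.prems(1)
  consider "m = 0" | "m = 1" | "2 \<le> m" by linarith
  then show ?case
  proof cases
    case 2
    show ?thesis
      unfolding 2 Tt_moment_trunc_one using N by (intro t_moment_trunc_mono) simp_all
  next
    case 3
    have "mean_next N (t_moment_trunc N n j) m \<le> mean_next N (t_moment_trunc N (Suc n) j) m"
      using N Suc.prems(2) by (intro mean_next_mono t_moment_trunc_mono) auto
    moreover have "mean_next N (Tt_moment_trunc N n j) m \<le> mean_next N (Tt_moment_trunc N (Suc n) j) m"
      using N Suc.prems(2) by (intro mean_next_mono Suc.IH) auto
    ultimately show ?thesis
      using 3 hold_moment_nonneg[of N 1] by (simp add: add_mono mult_left_mono)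
  qed simp
qed

lemma Tt_moment_trunc_convergent:
  assumes "1 \<le> N" "m \<le> N"
  shows "convergent (\<lambda>n. Tt_moment_trunc N n j m)"
proof -
  have "incseq (\<lambda>n. Tt_moment_trunc N n j m)"
    using Tt_moment_trunc_mono[OF assms] by (simp add: incseq_SucI)
  then show ?thesis
    using incseq_convergent[where B = "Tt_moment N j m"] Tt_moment_trunc_le[OF assms]
    by (metis convergent_def)
qed

lemma Tt_moment_trunc_tendsto:
  assumes N: "1 \<le> N"
  shows "m \<le> N \<Longrightarrow> (\<lambda>n. Tt_moment_trunc N n j m) \<longlonglongrightarrow> Tt_moment N j m"
proof (induction m)
  case 0
  have "Tt_moment_trunc N n j 0 = 0" for n by (cases n) simp_all
  then show ?case by (simp add: Tt_moment_def t_moment_def time_to_last_step_def)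
next
  case (Suc k)
  show ?case
  proof (cases "k = 0")
    case True
    then have "Suc k = 1" by simp
    show ?thesis
      unfolding \<open>Suc k = 1\<close> Tt_moment_trunc_one
      using t_moment_trunc_tendsto[OF N, of 1 "Suc j"] N
      by (simp add: Tt_moment_def time_to_last_step_def)
  next
    case False
    have rec: "Tt_moment_trunc N (Suc n) j (Suc k)
        = hold_moment N 1 * mean_next N (t_moment_trunc N n j) (Suc k)
          + mean_next N (Tt_moment_trunc N n j) (Suc k)" for n
      using False by simp
    have "(\<lambda>n. mean_next N (t_moment_trunc N n j) (Suc k)) \<longlonglongrightarrow> mean_next N (t_moment N j) (Suc k)"
      using Suc.prems by (intro mean_next_tendsto t_moment_trunc_tendsto[OF N]) simp_all
    also have "mean_next N (t_moment N j) (Suc k) = t_moment N j (Suc k)"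
      using False N by (simp add: mean_next_eq t_moment_def)
    finally have "(\<lambda>n. hold_moment N 1 * mean_next N (t_moment_trunc N n j) (Suc k))
        \<longlonglongrightarrow> hold_moment N 1 * t_moment N j (Suc k)"
      by (rule tendsto_mult_left)
    then show ?thesis
      using Suc False Tt_moment_fixed[OF N, of "Suc k" j]
      by (intro tendsto_mean_next_fixed_point[OF N _ Tt_moment_trunc_convergent[OF N Suc.prems] _ rec])
         simp_all
  qed
qed

(* The expected number of rings before halting: level k lasts mark_count N / k^2 rings. *)
definition rings_bound :: "nat \<Rightarrow> nat \<Rightarrow> real" where
  "rings_bound N m = mark_count N * (\<Sum>k\<in>{1..m}. 1 / (real k)\<^sup>2)"

lemma rings_bound_nonneg: "0 \<le> rings_bound N m"
  by (simp add: rings_bound_def mark_count_def sum_nonneg)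

lemma rings_bound_step:
  assumes N: "1 \<le> N"
  shows "(if m = 0 then 0 else 1) + mean_next N (rings_bound N) m = rings_bound N m"
proof (cases m)
  case (Suc k)
  have "rings_bound N m = rings_bound N k + mark_count N / (real m)\<^sup>2"
    by (simp add: Suc rings_bound_def algebra_simps)
  then show ?thesis
    using Suc mark_count_pos[OF N] by (simp add: mean_next_def field_simps)
qed (simp add: mean_next_eq[OF N])

section \<open>First-step analysis on the sample space\<close>

lemma (in prob_space) nn_integral_PiM_case_nat:
  assumes [measurable]: "f \<in> borel_measurable (\<Pi>\<^sub>M i\<in>UNIV. M)"
  shows "(\<integral>\<^sup>+\<omega>. f \<omega> \<partial>(\<Pi>\<^sub>M i\<in>UNIV. M)) = (\<integral>\<^sup>+x. \<integral>\<^sup>+\<omega>. f (case_nat x \<omega>) \<partial>(\<Pi>\<^sub>M i\<in>UNIV. M) \<partial>M)"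
proof -
  interpret S: sequence_space M ..
  have "(\<integral>\<^sup>+\<omega>. f \<omega> \<partial>S.S) = (\<integral>\<^sup>+X. f (case_prod case_nat X) \<partial>(M \<Otimes>\<^sub>M S.S))"
    by (subst S.PiM_iter[symmetric]) (simp add: nn_integral_distr)
  also have "\<dots> = (\<integral>\<^sup>+x. \<integral>\<^sup>+\<omega>. f (case_nat x \<omega>) \<partial>S.S \<partial>M)"
    by (subst S.nn_integral_fst[symmetric]) simp_all
  finally show ?thesis .
qed

definition hold_measure :: "nat \<Rightarrow> real measure" where
  "hold_measure N = density lborel (exponential_density (real N + 1))"

definition mark_measure :: "nat \<Rightarrow> (nat \<times> nat) measure" where
  "mark_measure N = measure_pmf (pmf_of_set (dsf_marks N))"

lemma dsf_step_measure_eq: "dsf_step_measure N = hold_measure N \<Otimes>\<^sub>M mark_measure N"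
  by (simp add: dsf_step_measure_def hold_measure_def mark_measure_def dsf_marks_def)

lemma prob_space_hold_measure: "prob_space (hold_measure N)"
  unfolding hold_measure_def by (rule prob_space_exponential_density) simp

lemma prob_space_mark_measure: "prob_space (mark_measure N)"
  unfolding mark_measure_def by (rule prob_space_measure_pmf)

lemma prob_space_dsf_step_measure: "prob_space (dsf_step_measure N)"
  by (simp add: dsf_step_measure_eq prob_space_pair prob_space_hold_measure prob_space_mark_measure)

lemma prob_space_dsf_space: "prob_space (dsf_space N)"
  unfolding dsf_space_def by (rule prob_space_PiM) (rule prob_space_dsf_step_measure)

lemma emeasure_dsf_space_space [simp]: "emeasure (dsf_space N) (space (dsf_space N)) = 1"
  by (rule prob_space.emeasure_space_1[OF prob_space_dsf_space])

lemma sets_hold_measure [measurable_cong]: "sets (hold_measure N) = sets borel"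
  by (simp add: hold_measure_def)

lemma sets_mark_measure [measurable_cong]: "sets (mark_measure N) = sets (count_space UNIV)"
  by (simp add: mark_measure_def)

lemma measurable_hold [measurable]: "(\<lambda>\<omega>. fst (\<omega> k)) \<in> borel_measurable (dsf_space N)"
  unfolding dsf_space_def dsf_step_measure_eq by measurable

lemma measurable_mark [measurable]: "(\<lambda>\<omega>. snd (\<omega> k)) \<in> dsf_space N \<rightarrow>\<^sub>M count_space UNIV"
  unfolding dsf_space_def dsf_step_measure_eq by measurable

lemma measurable_dsf_conf [measurable]: "Measurable.pred (dsf_space N) (\<lambda>\<omega>. P (dsf_conf N c \<omega> k))"
proof (induction k arbitrary: P)
  case (Suc k)
  have "(\<lambda>\<omega>. (\<lambda>mk \<omega>. P (dsf_step N (dsf_conf N c \<omega> k) mk)) (snd (\<omega> k)) \<omega>)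
      \<in> dsf_space N \<rightarrow>\<^sub>M count_space UNIV"
    by (rule measurable_compose_countable[OF Suc.IH measurable_mark])
  then show ?case by simp
qed simp

lemma nn_integral_dsf_space_first_step:
  assumes N: "1 \<le> N" and f: "f \<in> borel_measurable (dsf_space N)"
  shows "(\<integral>\<^sup>+\<omega>. f \<omega> \<partial>dsf_space N) = (\<integral>\<^sup>+a.
      (\<Sum>mk\<in>dsf_marks N. \<integral>\<^sup>+\<omega>. f (case_nat (a, mk) \<omega>) \<partial>dsf_space N) / ennreal (mark_count N)
      \<partial>hold_measure N)"
proof -
  interpret M: prob_space "dsf_step_measure N" by (rule prob_space_dsf_step_measure)
  interpret S: prob_space "dsf_space N" by (rule prob_space_dsf_space)
  interpret B: prob_space "mark_measure N" by (rule prob_space_mark_measure)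
  note [measurable] = f[unfolded dsf_space_def]
  let ?g = "\<lambda>x. \<integral>\<^sup>+\<omega>. f (case_nat x \<omega>) \<partial>dsf_space N"
  have "(\<lambda>(x, \<omega>). f (case_nat x \<omega>)) \<in> borel_measurable (dsf_step_measure N \<Otimes>\<^sub>M dsf_space N)"
    unfolding dsf_space_def by measurable
  then have [measurable]: "?g \<in> borel_measurable (hold_measure N \<Otimes>\<^sub>M mark_measure N)"
    using S.borel_measurable_nn_integral_fst[of "\<lambda>(x, \<omega>). f (case_nat x \<omega>)" "dsf_step_measure N"]
    by (simp add: dsf_step_measure_eq)
  have "(\<integral>\<^sup>+\<omega>. f \<omega> \<partial>dsf_space N) = (\<integral>\<^sup>+x. ?g x \<partial>(hold_measure N \<Otimes>\<^sub>M mark_measure N))"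
    using M.nn_integral_PiM_case_nat[OF f[unfolded dsf_space_def]]
    by (simp add: dsf_space_def dsf_step_measure_eq)
  also have "\<dots> = (\<integral>\<^sup>+a. \<integral>\<^sup>+mk. ?g (a, mk) \<partial>mark_measure N \<partial>hold_measure N)"
    by (rule B.nn_integral_fst[symmetric]) measurable
  also have "\<dots> = (\<integral>\<^sup>+a. (\<Sum>mk\<in>dsf_marks N. ?g (a, mk)) / ennreal (mark_count N) \<partial>hold_measure N)"
    using N by (simp add: mark_measure_def nn_integral_pmf_of_set ennreal_of_nat_eq_real_of_nat
        card_dsf_marks dsf_marks_nonempty)
  finally show ?thesis .
qed

lemma mark_average_empty_count:
  assumes N: "1 \<le> N" and c: "dsf_valid N c"
  shows "(\<Sum>mk\<in>dsf_marks N. h (dsf_empty_count N (dsf_step N c mk)))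
    = mean_next N h (dsf_empty_count N c) * mark_count N"
proof -
  let ?K = "dsf_marks N" and ?F = "dsf_filling_marks N c" and ?m = "dsf_empty_count N c"
  have F: "?F \<subseteq> ?K" "finite ?F" "card ?F \<le> card ?K"
    using dsf_filling_marks_subset[OF c] by (auto intro: finite_subset card_mono)
  have "(\<Sum>mk\<in>?K. h (dsf_empty_count N (dsf_step N c mk)))
      = (\<Sum>mk\<in>?K. if mk \<in> ?F then h (?m - 1) else h ?m)"
    by (intro sum.cong refl)
       (auto simp: dsf_empty_count_step[OF c] dsf_filling_marks_def dsf_marks_def split: prod.splits)
  also have "\<dots> = real (card ?F) * h (?m - 1) + real (card (?K - ?F)) * h ?m"
    using F by (simp add: sum.If_cases Int_absorb1 Diff_eq[symmetric])
  also have "real (card (?K - ?F)) = real (card ?K) - real (card ?F)"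
    using F by (simp only: card_Diff_subset of_nat_diff)
  finally show ?thesis
    using mark_count_pos[OF N] card_dsf_marks[of N] card_dsf_filling_marks[OF c]
    by (simp add: mean_next_def)
qed

(* Holding times are nonnegative only almost surely, hence the max 0 a in the integrands. *)
lemma ennreal_power_eq_max: "ennreal a ^ i = ennreal (max 0 a ^ i)"
proof (cases "0 \<le> a")
  case True
  then show ?thesis by (simp add: ennreal_power max_def)
next
  case False
  then show ?thesis by (cases i) (simp_all add: ennreal_neg max_def)
qed

lemma nn_integral_hold_measure_power:
  "(\<integral>\<^sup>+a. ennreal (max 0 a ^ i) \<partial>hold_measure N) = ennreal (hold_moment N i)"
proof -
  have "(\<integral>\<^sup>+a. ennreal (max 0 a ^ i) \<partial>hold_measure N)
      = (\<integral>\<^sup>+a. ennreal (erlang_density 0 (real N + 1) a * a ^ i) \<partial>lborel)"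
    unfolding hold_measure_def
    by (subst nn_integral_density)
       (auto intro!: nn_integral_cong simp: exponential_density_def erlang_density_def
         ennreal_mult'[symmetric] max_def)
  also have "\<dots> = ennreal (hold_moment N i)"
    using nn_integral_erlang_ith_moment[of "real N + 1" 0 i] by (simp add: hold_moment_def)
  finally show ?thesis .
qed

lemma nn_integral_hold_measure_poly:
  assumes "\<And>i. 0 \<le> K i"
  shows "(\<integral>\<^sup>+a. ennreal (\<Sum>i\<le>d. K i * max 0 a ^ i) \<partial>hold_measure N)
    = ennreal (\<Sum>i\<le>d. K i * hold_moment N i)"
proof -
  have "(\<integral>\<^sup>+a. ennreal (\<Sum>i\<le>d. K i * max 0 a ^ i) \<partial>hold_measure N)
      = (\<integral>\<^sup>+a. (\<Sum>i\<le>d. ennreal (K i) * ennreal (max 0 a ^ i)) \<partial>hold_measure N)"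
    using assms by (intro nn_integral_cong) (simp add: sum_ennreal[symmetric] ennreal_mult)
  also have "\<dots> = (\<Sum>i\<le>d. ennreal (K i) * ennreal (hold_moment N i))"
    by (subst nn_integral_sum) (simp_all add: nn_integral_cmult nn_integral_hold_measure_power)
  also have "\<dots> = ennreal (\<Sum>i\<le>d. K i * hold_moment N i)"
    using assms hold_moment_nonneg by (simp add: sum_ennreal[symmetric] ennreal_mult)
  finally show ?thesis .
qed

lemma nn_integral_hold_mark_average_poly:
  assumes N: "1 \<le> N" and c: "dsf_valid N c"
    and k: "\<And>i. 0 \<le> k i" and h: "\<And>i m. m \<le> N \<Longrightarrow> 0 \<le> h i m"
  shows "(\<integral>\<^sup>+a. (\<Sum>mk\<in>dsf_marks N.
        ennreal (\<Sum>i\<le>d. k i * max 0 a ^ i * h i (dsf_empty_count N (dsf_step N c mk))))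
        / ennreal (mark_count N) \<partial>hold_measure N)
    = ennreal (\<Sum>i\<le>d. k i * hold_moment N i * mean_next N (h i) (dsf_empty_count N c))"
proof -
  let ?m = "dsf_empty_count N c"
  let ?h = "\<lambda>i mk. h i (dsf_empty_count N (dsf_step N c mk))"
  have Q: "0 < mark_count N" using mark_count_pos[OF N] .
  have hK: "0 \<le> ?h i mk" for i mk
    using h dsf_empty_count_le[OF dsf_valid_step[OF c]] by blast
  have P: "0 \<le> (\<Sum>i\<le>d. k i * max 0 a ^ i * ?h i mk)" for a mk
    by (intro sum_nonneg mult_nonneg_nonneg) (simp_all add: k hK)
  have "(\<Sum>mk\<in>dsf_marks N. \<Sum>i\<le>d. k i * max 0 a ^ i * ?h i mk)
      = (\<Sum>i\<le>d. (k i * mean_next N (h i) ?m) * max 0 a ^ i) * mark_count N" for a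
    by (subst sum.swap)
       (simp add: sum_distrib_left[symmetric] sum_distrib_right mark_average_empty_count[OF N c] ac_simps)
  moreover have "(\<Sum>mk\<in>dsf_marks N. ennreal (\<Sum>i\<le>d. k i * max 0 a ^ i * ?h i mk)) / ennreal (mark_count N)
      = ennreal ((\<Sum>mk\<in>dsf_marks N. \<Sum>i\<le>d. k i * max 0 a ^ i * ?h i mk) / mark_count N)" for a
    using P Q by (simp add: sum_ennreal divide_ennreal sum_nonneg)
  ultimately have avg: "(\<Sum>mk\<in>dsf_marks N. ennreal (\<Sum>i\<le>d. k i * max 0 a ^ i * ?h i mk))
      / ennreal (mark_count N) = ennreal (\<Sum>i\<le>d. (k i * mean_next N (h i) ?m) * max 0 a ^ i)" for a
    using Q by simp
  have "0 \<le> k i * mean_next N (h i) ?m" for i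
    using k h N dsf_empty_count_le[OF c] by (auto intro!: mult_nonneg_nonneg mean_next_nonneg)
  then have "(\<integral>\<^sup>+a. ennreal (\<Sum>i\<le>d. (k i * mean_next N (h i) ?m) * max 0 a ^ i) \<partial>hold_measure N)
      = ennreal (\<Sum>i\<le>d. (k i * mean_next N (h i) ?m) * hold_moment N i)"
    by (rule nn_integral_hold_measure_poly)
  then show ?thesis
    by (simp only: avg) (simp add: ac_simps)
qed

lemma nn_integral_first_step_poly:
  assumes N: "1 \<le> N" and c: "dsf_valid N c" and f: "f \<in> borel_measurable (dsf_space N)"
    and k: "\<And>i. 0 \<le> k i" and h: "\<And>i m. m \<le> N \<Longrightarrow> 0 \<le> h i m"
    and first: "\<And>a mk. (\<integral>\<^sup>+\<omega>. f (case_nat (a, mk) \<omega>) \<partial>dsf_space N)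
      = ennreal (\<Sum>i\<le>d. k i * max 0 a ^ i * h i (dsf_empty_count N (dsf_step N c mk)))"
  shows "(\<integral>\<^sup>+\<omega>. f \<omega> \<partial>dsf_space N)
    = ennreal (\<Sum>i\<le>d. k i * hold_moment N i * mean_next N (h i) (dsf_empty_count N c))"
  unfolding nn_integral_dsf_space_first_step[OF N f] first
  by (rule nn_integral_hold_mark_average_poly[OF N c k h])

lemma nn_integral_first_step_poly_le:
  assumes N: "1 \<le> N" and c: "dsf_valid N c" and f: "f \<in> borel_measurable (dsf_space N)"
    and k: "\<And>i. 0 \<le> k i" and h: "\<And>i m. m \<le> N \<Longrightarrow> 0 \<le> h i m"
    and first: "\<And>a mk. (\<integral>\<^sup>+\<omega>. f (case_nat (a, mk) \<omega>) \<partial>dsf_space N)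
      \<le> ennreal (\<Sum>i\<le>d. k i * max 0 a ^ i * h i (dsf_empty_count N (dsf_step N c mk)))"
  shows "(\<integral>\<^sup>+\<omega>. f \<omega> \<partial>dsf_space N)
    \<le> ennreal (\<Sum>i\<le>d. k i * hold_moment N i * mean_next N (h i) (dsf_empty_count N c))"
proof -
  have "(\<integral>\<^sup>+\<omega>. f \<omega> \<partial>dsf_space N) \<le> (\<integral>\<^sup>+a. (\<Sum>mk\<in>dsf_marks N.
        ennreal (\<Sum>i\<le>d. k i * max 0 a ^ i * h i (dsf_empty_count N (dsf_step N c mk))))
        / ennreal (mark_count N) \<partial>hold_measure N)"
    unfolding nn_integral_dsf_space_first_step[OF N f]
    by (intro nn_integral_mono divide_right_mono_ennreal sum_mono first)
  also have "\<dots> = ennreal (\<Sum>i\<le>d. k i * hold_moment N i * mean_next N (h i) (dsf_empty_count N c))"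
    by (rule nn_integral_hold_mark_average_poly[OF N c k h])
  finally show ?thesis .
qed

section \<open>Truncated occupation times\<close>

lemma dsf_valid_conf: "dsf_valid N c \<Longrightarrow> dsf_valid N (dsf_conf N c \<omega> k)"
  by (induction k) (auto intro: dsf_valid_step)

lemma dsf_empty_count_conf_mono:
  assumes "dsf_valid N c" "k \<le> k'"
  shows "dsf_empty_count N (dsf_conf N c \<omega> k') \<le> dsf_empty_count N (dsf_conf N c \<omega> k)"
  using assms(2)
  by (induction rule: dec_induct)
     (auto intro: order_trans[OF dsf_empty_count_step_le[OF dsf_valid_conf[OF assms(1)]]])

(* Holding time (g = ennreal) or number of rings (g = 1) accumulated during the first n rings
   while the number of empty vertices satisfies P; T and t arise as n tends to infinity. *)
definition dsf_occupation ::
    "nat \<Rightarrow> dsf_config \<Rightarrow> (nat \<Rightarrow> bool) \<Rightarrow> (real \<Rightarrow> ennreal) \<Rightarrow> nat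
      \<Rightarrow> (nat \<Rightarrow> real \<times> nat \<times> nat) \<Rightarrow> ennreal" where
  "dsf_occupation N c P g n \<omega> =
     (\<Sum>k<n. if P (dsf_empty_count N (dsf_conf N c \<omega> k)) then g (fst (\<omega> k)) else 0)"

abbreviation "T_upto N c \<equiv> dsf_occupation N c (\<lambda>m. 0 < m) ennreal"
abbreviation "t_upto N c \<equiv> dsf_occupation N c (\<lambda>m. m = 1) ennreal"
abbreviation "rings_upto N c \<equiv> dsf_occupation N c (\<lambda>m. 0 < m) (\<lambda>_. 1)"

lemma measurable_dsf_occupation [measurable]:
  assumes [measurable]: "g \<in> borel_measurable borel"
  shows "dsf_occupation N c P g n \<in> borel_measurable (dsf_space N)"
  unfolding dsf_occupation_def by measurable

lemma incseq_dsf_occupation: "incseq (\<lambda>n. dsf_occupation N c P g n \<omega>)"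
  by (rule incseq_SucI) (simp add: dsf_occupation_def)

lemma dsf_occupation_Suc_case_nat:
  "dsf_occupation N c P g (Suc n) (case_nat x \<omega>)
    = (if P (dsf_empty_count N c) then g (fst x) else 0) + dsf_occupation N (dsf_step N c (snd x)) P g n \<omega>"
proof -
  have shift: "case_nat x \<omega> (Suc k) = \<omega> k" for k by simp
  have "dsf_conf N c (case_nat x \<omega>) (Suc k) = dsf_conf N (dsf_step N c (snd x)) \<omega> k" for k
    by (induction k) simp_all
  then show ?thesis
    unfolding dsf_occupation_def sum.lessThan_Suc_shift shift by simp
qed

lemma dsf_occupation_cong:
  assumes "dsf_valid N c" "\<And>m. m \<le> dsf_empty_count N c \<Longrightarrow> P m \<longleftrightarrow> P' m"
  shows "dsf_occupation N c P g n \<omega> = dsf_occupation N c P' g n \<omega>"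
  unfolding dsf_occupation_def
  using assms dsf_empty_count_conf_mono[OF assms(1), of 0] by (intro sum.cong) auto

lemma dsf_occupation_start_halted:
  assumes "dsf_valid N c" "dsf_empty_count N c = 0" "\<not> P 0"
  shows "dsf_occupation N c P g n \<omega> = 0"
proof -
  have "dsf_occupation N c P g n \<omega> = dsf_occupation N c (\<lambda>_. False) g n \<omega>"
    using assms by (intro dsf_occupation_cong) auto
  then show ?thesis by (simp add: dsf_occupation_def)
qed

lemma nn_integral_t_upto_power_shift_one:
  assumes "dsf_empty_count N c = 1"
  shows "(\<integral>\<^sup>+\<omega>. t_upto N c (Suc n) (case_nat (a, mk) \<omega>) ^ j \<partial>dsf_space N)
    = (\<Sum>i\<le>j. of_nat (j choose i) * ennreal a ^ i
        * (\<integral>\<^sup>+\<omega>. t_upto N (dsf_step N c mk) n \<omega> ^ (j - i) \<partial>dsf_space N))"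
proof -
  have "(\<integral>\<^sup>+\<omega>. t_upto N c (Suc n) (case_nat (a, mk) \<omega>) ^ j \<partial>dsf_space N)
      = (\<integral>\<^sup>+\<omega>. (\<Sum>i\<le>j. of_nat (j choose i) * ennreal a ^ i * t_upto N (dsf_step N c mk) n \<omega> ^ (j - i))
          \<partial>dsf_space N)"
    using assms by (simp add: dsf_occupation_Suc_case_nat binomial_ring)
  also have "\<dots> = (\<Sum>i\<le>j. of_nat (j choose i) * ennreal a ^ i
      * (\<integral>\<^sup>+\<omega>. t_upto N (dsf_step N c mk) n \<omega> ^ (j - i) \<partial>dsf_space N))"
    by (subst nn_integral_sum) (simp_all add: nn_integral_cmult)
  finally show ?thesis .
qed

lemma nn_integral_T_upto_t_upto_power_shift:
  assumes "2 \<le> dsf_empty_count N c"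
  shows "(\<integral>\<^sup>+\<omega>. T_upto N c (Suc n) (case_nat (a, mk) \<omega>) * t_upto N c (Suc n) (case_nat (a, mk) \<omega>) ^ j
      \<partial>dsf_space N)
    = ennreal a * (\<integral>\<^sup>+\<omega>. t_upto N (dsf_step N c mk) n \<omega> ^ j \<partial>dsf_space N)
      + (\<integral>\<^sup>+\<omega>. T_upto N (dsf_step N c mk) n \<omega> * t_upto N (dsf_step N c mk) n \<omega> ^ j \<partial>dsf_space N)"
proof -
  have "T_upto N c (Suc n) (case_nat (a, mk) \<omega>) = ennreal a + T_upto N (dsf_step N c mk) n \<omega>"
    "t_upto N c (Suc n) (case_nat (a, mk) \<omega>) = t_upto N (dsf_step N c mk) n \<omega>" for \<omega>
    using assms by (simp_all add: dsf_occupation_Suc_case_nat)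
  then show ?thesis
    by (simp add: distrib_right nn_integral_add nn_integral_cmult)
qed

lemma nn_integral_t_upto_power:
  assumes N: "1 \<le> N"
  shows "dsf_valid N c \<Longrightarrow>
    (\<integral>\<^sup>+\<omega>. t_upto N c n \<omega> ^ j \<partial>dsf_space N) = ennreal (t_moment_trunc N n j (dsf_empty_count N c))"
proof (induction n arbitrary: c j)
  case 0
  then show ?case by (simp add: dsf_occupation_def)
next
  case (Suc n)
  note c = Suc.prems
  let ?m = "dsf_empty_count N c"
  have IH: "(\<integral>\<^sup>+\<omega>. t_upto N (dsf_step N c mk) n \<omega> ^ j \<partial>dsf_space N)
      = ennreal (t_moment_trunc N n j (dsf_empty_count N (dsf_step N c mk)))" for mk j
    using Suc.IH dsf_valid_step[OF c] by blast
  have vv: "0 \<le> t_moment_trunc N n j m" if "m \<le> N" for j m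
    using t_moment_trunc_nonneg[OF N that] .
  consider "?m = 0" | "?m = 1" | "2 \<le> ?m" by linarith
  then show ?case
  proof cases
    case 1
    then show ?thesis by (simp add: dsf_occupation_start_halted[OF c] t_moment_step_def)
  next
    case 2
    have "(\<integral>\<^sup>+\<omega>. t_upto N c (Suc n) (case_nat (a, mk) \<omega>) ^ j \<partial>dsf_space N)
        = ennreal (\<Sum>i\<le>j. real (j choose i) * max 0 a ^ i
            * t_moment_trunc N n (j - i) (dsf_empty_count N (dsf_step N c mk)))" for a mk
      using vv dsf_empty_count_le[OF dsf_valid_step[OF c]]
      by (simp only: nn_integral_t_upto_power_shift_one[OF 2] IH, subst sum_ennreal[symmetric])
         (simp_all add: ennreal_power_eq_max ennreal_mult ennreal_of_nat_eq_real_of_nat)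
    then show ?thesis
      using 2 vv
      by (subst nn_integral_first_step_poly[OF N c, where d = j and k = "\<lambda>i. real (j choose i)"
            and h = "\<lambda>i. t_moment_trunc N n (j - i)"])
         (simp_all add: t_moment_step_def)
  next
    case 3
    have "(\<integral>\<^sup>+\<omega>. t_upto N c (Suc n) (case_nat (a, mk) \<omega>) ^ j \<partial>dsf_space N)
        = ennreal (\<Sum>i\<le>0. 1 * max 0 a ^ i * t_moment_trunc N n j (dsf_empty_count N (dsf_step N c mk)))"
      for a mk
    proof -
      have "t_upto N c (Suc n) (case_nat (a, mk) \<omega>) = t_upto N (dsf_step N c mk) n \<omega>" for \<omega>
        using 3 by (simp add: dsf_occupation_Suc_case_nat)
      then show ?thesis by (simp only: IH) simp
    qed
    then show ?thesis
      using 3 vv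
      by (subst nn_integral_first_step_poly[OF N c, where d = 0 and k = "\<lambda>_. 1"
            and h = "\<lambda>_. t_moment_trunc N n j"])
         (simp_all add: t_moment_step_def hold_moment_def)
  qed
qed

lemma nn_integral_T_upto_t_upto_power:
  assumes N: "1 \<le> N"
  shows "dsf_valid N c \<Longrightarrow> (\<integral>\<^sup>+\<omega>. T_upto N c n \<omega> * t_upto N c n \<omega> ^ j \<partial>dsf_space N)
    = ennreal (Tt_moment_trunc N n j (dsf_empty_count N c))"
proof (induction n arbitrary: c)
  case 0
  then show ?case by (simp add: dsf_occupation_def)
next
  case (Suc n)
  note c = Suc.prems
  let ?m = "dsf_empty_count N c"
  consider "?m = 0" | "?m = 1" | "2 \<le> ?m" by linarith
  then show ?case
  proof cases
    case 1
    then show ?thesis by (simp add: dsf_occupation_start_halted[OF c])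
  next
    case 2
    have "T_upto N c (Suc n) \<omega> = t_upto N c (Suc n) \<omega>" for \<omega>
      using 2 by (intro dsf_occupation_cong[OF c]) auto
    then have "(\<integral>\<^sup>+\<omega>. T_upto N c (Suc n) \<omega> * t_upto N c (Suc n) \<omega> ^ j \<partial>dsf_space N)
        = (\<integral>\<^sup>+\<omega>. t_upto N c (Suc n) \<omega> ^ Suc j \<partial>dsf_space N)"
      by simp
    also have "\<dots> = ennreal (Tt_moment_trunc N (Suc n) j ?m)"
      unfolding nn_integral_t_upto_power[OF N c] 2 Tt_moment_trunc_one ..
    finally show ?thesis .
  next
    case 3
    have IH: "(\<integral>\<^sup>+\<omega>. T_upto N (dsf_step N c mk) n \<omega> * t_upto N (dsf_step N c mk) n \<omega> ^ j \<partial>dsf_space N)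
        = ennreal (Tt_moment_trunc N n j (dsf_empty_count N (dsf_step N c mk)))" for mk
      using Suc.IH dsf_valid_step[OF c] by blast
    have "(\<integral>\<^sup>+\<omega>. T_upto N c (Suc n) (case_nat (a, mk) \<omega>) * t_upto N c (Suc n) (case_nat (a, mk) \<omega>) ^ j
          \<partial>dsf_space N)
        = ennreal (\<Sum>i\<le>1. 1 * max 0 a ^ i * (if i = 0 then Tt_moment_trunc N n j else t_moment_trunc N n j)
            (dsf_empty_count N (dsf_step N c mk)))" for a mk
      using t_moment_trunc_nonneg[OF N] Tt_moment_trunc_nonneg[OF N]
        dsf_empty_count_le[OF dsf_valid_step[OF c]]
      by (simp only: nn_integral_T_upto_t_upto_power_shift[OF 3] IH nn_integral_t_upto_power[OF N dsf_valid_step[OF c]])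
         (simp add: ennreal_power_eq_max[of a 1, simplified] ennreal_mult ennreal_plus add.commute)
    then show ?thesis
      using 3 t_moment_trunc_nonneg[OF N] Tt_moment_trunc_nonneg[OF N]
      by (subst nn_integral_first_step_poly[OF N c, where d = 1 and k = "\<lambda>_. 1"
            and h = "\<lambda>i. if i = 0 then Tt_moment_trunc N n j else t_moment_trunc N n j"])
         (simp_all add: hold_moment_def add.commute)
  qed
qed

lemma nn_integral_rings_upto_le:
  assumes N: "1 \<le> N"
  shows "dsf_valid N c \<Longrightarrow>
    (\<integral>\<^sup>+\<omega>. rings_upto N c n \<omega> \<partial>dsf_space N) \<le> ennreal (rings_bound N (dsf_empty_count N c))"
proof (induction n arbitrary: c)
  case 0
  then show ?case by (simp add: dsf_occupation_def)
next
  case (Suc n)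
  note c = Suc.prems
  let ?b = "if dsf_empty_count N c = 0 then 0 else 1 :: real"
  have "(\<integral>\<^sup>+\<omega>. rings_upto N c (Suc n) (case_nat (a, mk) \<omega>) \<partial>dsf_space N)
      \<le> ennreal (\<Sum>i\<le>0. 1 * max 0 a ^ i * (\<lambda>m. ?b + rings_bound N m) (dsf_empty_count N (dsf_step N c mk)))"
    for a mk
  proof -
    have "(\<integral>\<^sup>+\<omega>. rings_upto N c (Suc n) (case_nat (a, mk) \<omega>) \<partial>dsf_space N)
        = ennreal ?b + (\<integral>\<^sup>+\<omega>. rings_upto N (dsf_step N c mk) n \<omega> \<partial>dsf_space N)"
      by (simp add: dsf_occupation_Suc_case_nat nn_integral_add)
    also have "\<dots> \<le> ennreal ?b + ennreal (rings_bound N (dsf_empty_count N (dsf_step N c mk)))"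
      using Suc.IH[OF dsf_valid_step[OF c]] by (rule add_left_mono)
    finally show ?thesis by (simp add: ennreal_plus rings_bound_nonneg)
  qed
  then have "(\<integral>\<^sup>+\<omega>. rings_upto N c (Suc n) \<omega> \<partial>dsf_space N)
      \<le> ennreal (\<Sum>i\<le>0. 1 * hold_moment N i * mean_next N (\<lambda>m. ?b + rings_bound N m) (dsf_empty_count N c))"
    using rings_bound_nonneg
    by (intro nn_integral_first_step_poly_le[OF N c, where h = "\<lambda>_ m. ?b + rings_bound N m"]) simp_all
  also have "\<dots> = ennreal (rings_bound N (dsf_empty_count N c))"
    using rings_bound_step[OF N] by (simp add: hold_moment_def mean_next_add_const[OF N])
  finally show ?case .
qed

section \<open>Halting and the moments of T and t\<close>

lemma integral_eq_lim_of_nn_integral_approx: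
  fixes F :: "nat \<Rightarrow> 'a \<Rightarrow> ennreal" and f :: "'a \<Rightarrow> real"
  assumes [measurable]: "\<And>n. F n \<in> borel_measurable M" "f \<in> borel_measurable M"
    and inc: "\<And>\<omega>. incseq (\<lambda>n. F n \<omega>)"
    and ae: "AE \<omega> in M. 0 \<le> f \<omega> \<and> (\<forall>\<^sub>F n in sequentially. F n \<omega> = ennreal (f \<omega>))"
    and s: "\<And>n. (\<integral>\<^sup>+\<omega>. F n \<omega> \<partial>M) = ennreal (s n)" "\<And>n. 0 \<le> s n"
    and L: "s \<longlonglongrightarrow> L"
  shows "(\<integral>\<omega>. f \<omega> \<partial>M) = L"
proof -
  have "AE \<omega> in M. (SUP n. F n \<omega>) = ennreal (f \<omega>)"
    using ae by eventually_elim (auto intro: LIMSEQ_unique[OF LIMSEQ_SUP[OF inc]] tendsto_eventually)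
  then have "(\<integral>\<^sup>+\<omega>. ennreal (f \<omega>) \<partial>M) = (\<integral>\<^sup>+\<omega>. (SUP n. F n \<omega>) \<partial>M)"
    by (intro nn_integral_cong_AE) auto
  also have "\<dots> = (SUP n. \<integral>\<^sup>+\<omega>. F n \<omega> \<partial>M)"
    using inc by (intro nn_integral_monotone_convergence_SUP) (auto simp: incseq_def le_fun_def)
  also have "\<dots> = ennreal L"
  proof -
    have "incseq (\<lambda>n. \<integral>\<^sup>+\<omega>. F n \<omega> \<partial>M)"
      using inc by (auto simp: incseq_def intro!: nn_integral_mono)
    then show ?thesis
      using L by (auto simp: s intro: LIMSEQ_unique[OF LIMSEQ_SUP] tendsto_ennrealI)
  qed
  finally have "(\<integral>\<omega>. f \<omega> \<partial>M) = enn2real (ennreal L)"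
    using ae by (subst integral_eq_nn_integral) (auto elim: AE_mp)
  moreover have "0 \<le> L"
    using LIMSEQ_le_const[OF L, of 0] s(2) by blast
  ultimately show ?thesis by simp
qed

lemma AE_dsf_hold_nonneg: "AE \<omega> in dsf_space N. \<forall>k. 0 \<le> fst (\<omega> k)"
proof -
  interpret P: pair_sigma_finite "hold_measure N" "mark_measure N"
    using prob_space_hold_measure prob_space_mark_measure
    by (simp add: pair_sigma_finite_def prob_space_imp_sigma_finite)
  have "AE a in hold_measure N. 0 \<le> a"
    unfolding hold_measure_def by (subst AE_density) (auto simp: exponential_density_def)
  then have "AE x in dsf_step_measure N. 0 \<le> fst x"
    unfolding dsf_step_measure_eq by (intro P.AE_pair_measure) auto
  then have "AE \<omega> in dsf_space N. 0 \<le> fst (\<omega> k)" for k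
    unfolding dsf_space_def
    by (intro AE_PiM_component[where I = UNIV]) (simp_all add: prob_space_dsf_step_measure)
  then show ?thesis by (simp add: AE_all_countable)
qed

lemma AE_dsf_halts:
  assumes N: "1 \<le> N" and c: "dsf_valid N c"
  shows "AE \<omega> in dsf_space N. \<exists>k. dsf_empty_count N (dsf_conf N c \<omega> k) = 0"
proof -
  have "(\<integral>\<^sup>+\<omega>. (SUP n. rings_upto N c n \<omega>) \<partial>dsf_space N) = (SUP n. \<integral>\<^sup>+\<omega>. rings_upto N c n \<omega> \<partial>dsf_space N)"
    using incseq_dsf_occupation
    by (intro nn_integral_monotone_convergence_SUP) (auto simp: incseq_def le_fun_def)
  also have "\<dots> \<le> ennreal (rings_bound N (dsf_empty_count N c))"
    by (intro SUP_least nn_integral_rings_upto_le[OF N c])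
  finally have "AE \<omega> in dsf_space N. (SUP n. rings_upto N c n \<omega>) \<noteq> \<infinity>"
    by (intro nn_integral_PInf_AE) (auto simp: top_unique)
  moreover have "(SUP n. rings_upto N c n \<omega>) = \<infinity>"
    if "\<forall>k. dsf_empty_count N (dsf_conf N c \<omega> k) \<noteq> 0" for \<omega>
    using that ennreal_SUP_of_nat_eq_top by (simp add: dsf_occupation_def)
  ultimately show ?thesis
    by (metis (mono_tags, lifting) eventually_mono)
qed

lemma measurable_dsf_halt_index [measurable]:
  "dsf_halt_index N c \<in> dsf_space N \<rightarrow>\<^sub>M count_space UNIV"
  unfolding dsf_halt_index_def by measurable

lemma measurable_dsf_T [measurable]: "dsf_T N c \<in> borel_measurable (dsf_space N)"
  unfolding dsf_T_def
  by (rule measurable_compose_countable[where f = "\<lambda>i \<omega>. \<Sum>k<i. fst (\<omega> k)", OF _ measurable_dsf_halt_index])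
     measurable

lemma measurable_dsf_t [measurable]: "dsf_t N c \<in> borel_measurable (dsf_space N)"
  unfolding dsf_t_def
  by (rule measurable_compose_countable[where f = "\<lambda>i \<omega>. \<Sum>k<i.
        if dsf_empty_count N (dsf_conf N c \<omega> k) = 1 then fst (\<omega> k) else 0", OF _ measurable_dsf_halt_index])
     measurable

lemma dsf_halt_index_le_iff:
  assumes c: "dsf_valid N c" and halts: "\<exists>k. dsf_empty_count N (dsf_conf N c \<omega> k) = 0"
  shows "dsf_halt_index N c \<omega> \<le> k \<longleftrightarrow> dsf_empty_count N (dsf_conf N c \<omega> k) = 0"
proof -
  have halted: "dsf_halted N (dsf_conf N c \<omega> k) \<longleftrightarrow> dsf_empty_count N (dsf_conf N c \<omega> k) = 0" for k
    using dsf_halted_iff_empty_count[OF dsf_valid_conf[OF c]] .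
  then have "dsf_empty_count N (dsf_conf N c \<omega> (dsf_halt_index N c \<omega>)) = 0"
    using LeastI_ex[of "\<lambda>k. dsf_halted N (dsf_conf N c \<omega> k)"] halts
    by (auto simp: dsf_halt_index_def)
  then show ?thesis
    using dsf_empty_count_conf_mono[OF c, of "dsf_halt_index N c \<omega>" k \<omega>] halted Least_le
    by (fastforce simp: dsf_halt_index_def)
qed

lemma dsf_occupation_after_halt:
  assumes c: "dsf_valid N c" and halts: "\<exists>k. dsf_empty_count N (dsf_conf N c \<omega> k) = 0"
    and "\<not> P 0" and n: "dsf_halt_index N c \<omega> \<le> n"
  shows "dsf_occupation N c P g n \<omega> = (\<Sum>k<dsf_halt_index N c \<omega>.
      if P (dsf_empty_count N (dsf_conf N c \<omega> k)) then g (fst (\<omega> k)) else 0)"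
proof -
  have "{..<n} = {..<dsf_halt_index N c \<omega>} \<union> {dsf_halt_index N c \<omega>..<n}"
    using n by auto
  then show ?thesis
    using assms dsf_halt_index_le_iff[OF c halts]
    by (simp add: dsf_occupation_def sum.union_disjoint ivl_disj_int(2))
qed

lemma T_upto_after_halt:
  assumes "dsf_valid N c" "\<exists>k. dsf_empty_count N (dsf_conf N c \<omega> k) = 0"
    and "\<forall>k. 0 \<le> fst (\<omega> k)" and "dsf_halt_index N c \<omega> \<le> n"
  shows "T_upto N c n \<omega> = ennreal (dsf_T N c \<omega>)"
proof -
  have "(\<Sum>k<dsf_halt_index N c \<omega>. if 0 < dsf_empty_count N (dsf_conf N c \<omega> k) then ennreal (fst (\<omega> k)) else 0)
      = (\<Sum>k<dsf_halt_index N c \<omega>. ennreal (fst (\<omega> k)))"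
  proof (intro sum.cong refl)
    fix k assume "k \<in> {..<dsf_halt_index N c \<omega>}"
    then have "0 < dsf_empty_count N (dsf_conf N c \<omega> k)"
      using dsf_halt_index_le_iff[OF assms(1,2), of k] by auto
    then show "(if 0 < dsf_empty_count N (dsf_conf N c \<omega> k) then ennreal (fst (\<omega> k)) else 0)
        = ennreal (fst (\<omega> k))" by simp
  qed
  then show ?thesis
    using assms by (simp add: dsf_occupation_after_halt dsf_T_def sum_ennreal)
qed

lemma t_upto_after_halt:
  assumes "dsf_valid N c" "\<exists>k. dsf_empty_count N (dsf_conf N c \<omega> k) = 0"
    and "\<forall>k. 0 \<le> fst (\<omega> k)" and "dsf_halt_index N c \<omega> \<le> n"
  shows "t_upto N c n \<omega> = ennreal (dsf_t N c \<omega>)"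
  using assms
  by (simp add: dsf_occupation_after_halt dsf_t_def sum_ennreal[symmetric] if_distrib cong: if_cong)

lemma dsf_T_t_power_expectation:
  assumes N: "1 \<le> N" and c: "dsf_valid N c"
  shows "(\<integral>\<omega>. dsf_T N c \<omega> * dsf_t N c \<omega> ^ j \<partial>dsf_space N) = Tt_moment N j (dsf_empty_count N c)"
proof (rule integral_eq_lim_of_nn_integral_approx)
  show "incseq (\<lambda>n. T_upto N c n \<omega> * t_upto N c n \<omega> ^ j)" for \<omega>
    using incseq_dsf_occupation by (auto simp: incseq_def intro!: mult_mono power_mono)
  show "AE \<omega> in dsf_space N. 0 \<le> dsf_T N c \<omega> * dsf_t N c \<omega> ^ j \<and>
      (\<forall>\<^sub>F n in sequentially. T_upto N c n \<omega> * t_upto N c n \<omega> ^ j = ennreal (dsf_T N c \<omega> * dsf_t N c \<omega> ^ j))"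
    using AE_dsf_hold_nonneg AE_dsf_halts[OF N c]
  proof eventually_elim
    case (elim \<omega>)
    then have "0 \<le> dsf_T N c \<omega>" "0 \<le> dsf_t N c \<omega>"
      by (auto simp: dsf_T_def dsf_t_def intro!: sum_nonneg)
    moreover have "\<forall>\<^sub>F n in sequentially.
        T_upto N c n \<omega> = ennreal (dsf_T N c \<omega>) \<and> t_upto N c n \<omega> = ennreal (dsf_t N c \<omega>)"
      using eventually_ge_at_top[of "dsf_halt_index N c \<omega>"]
      by eventually_elim (intro conjI T_upto_after_halt[OF c] t_upto_after_halt[OF c]; use elim in blast)
    ultimately show ?case
      by (auto simp: ennreal_mult ennreal_power elim: eventually_mono)
  qed
  show "(\<lambda>n. Tt_moment_trunc N n j (dsf_empty_count N c)) \<longlonglongrightarrow> Tt_moment N j (dsf_empty_count N c)"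
    using Tt_moment_trunc_tendsto[OF N dsf_empty_count_le[OF c]] .
  show "(\<integral>\<^sup>+\<omega>. T_upto N c n \<omega> * t_upto N c n \<omega> ^ j \<partial>dsf_space N)
      = ennreal (Tt_moment_trunc N n j (dsf_empty_count N c))" for n
    by (rule nn_integral_T_upto_t_upto_power[OF N c])
  show "0 \<le> Tt_moment_trunc N n j (dsf_empty_count N c)" for n
    by (rule Tt_moment_trunc_nonneg[OF N dsf_empty_count_le[OF c]])
qed simp_all

lemma dsf_t_power_expectation:
  assumes N: "1 \<le> N" and c: "dsf_valid N c"
  shows "(\<integral>\<omega>. dsf_t N c \<omega> ^ j \<partial>dsf_space N) = t_moment N j (dsf_empty_count N c)"
proof (rule integral_eq_lim_of_nn_integral_approx)
  show "incseq (\<lambda>n. t_upto N c n \<omega> ^ j)" for \<omega>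
    using incseq_dsf_occupation by (auto simp: incseq_def intro!: power_mono)
  show "AE \<omega> in dsf_space N. 0 \<le> dsf_t N c \<omega> ^ j \<and>
      (\<forall>\<^sub>F n in sequentially. t_upto N c n \<omega> ^ j = ennreal (dsf_t N c \<omega> ^ j))"
    using AE_dsf_hold_nonneg AE_dsf_halts[OF N c]
  proof eventually_elim
    case (elim \<omega>)
    then have "0 \<le> dsf_t N c \<omega>"
      by (auto simp: dsf_t_def intro!: sum_nonneg)
    moreover have "\<forall>\<^sub>F n in sequentially. t_upto N c n \<omega> = ennreal (dsf_t N c \<omega>)"
      using eventually_ge_at_top[of "dsf_halt_index N c \<omega>"]
      by eventually_elim (intro t_upto_after_halt[OF c]; use elim in blast)
    ultimately show ?case
      by (auto simp: ennreal_power elim: eventually_mono)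
  qed
  show "(\<lambda>n. t_moment_trunc N n j (dsf_empty_count N c)) \<longlonglongrightarrow> t_moment N j (dsf_empty_count N c)"
    using t_moment_trunc_tendsto[OF N dsf_empty_count_le[OF c]] .
  show "(\<integral>\<^sup>+\<omega>. t_upto N c n \<omega> ^ j \<partial>dsf_space N) = ennreal (t_moment_trunc N n j (dsf_empty_count N c))"
    for n
    by (rule nn_integral_t_upto_power[OF N c])
  show "0 \<le> t_moment_trunc N n j (dsf_empty_count N c)" for n
    by (rule t_moment_trunc_nonneg[OF N dsf_empty_count_le[OF c]])
qed simp_all

section \<open>The limits\<close>

lemma tendsto_inv_sq_sum_from_two: "(\<lambda>m. \<Sum>k\<in>{2..m}. 1 / (real k)\<^sup>2) \<longlonglongrightarrow> pi\<^sup>2 / 6 - 1"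
proof -
  have partial: "(\<lambda>m. \<Sum>i<m. 1 / (real i + 1)\<^sup>2) \<longlonglongrightarrow> pi\<^sup>2 / 6"
    using inverse_squares_sums by (simp add: sums_def add.commute)
  have shift: "(\<Sum>k\<in>{2..Suc m}. 1 / (real k)\<^sup>2) = (\<Sum>i<Suc m. 1 / (real i + 1)\<^sup>2) - 1" for m
  proof -
    have "(\<Sum>i<Suc m. 1 / (real i + 1)\<^sup>2) = (\<Sum>k\<in>{Suc 0..Suc m}. 1 / (real k)\<^sup>2)"
      by (subst sum.atLeast1_atMost_eq) (simp add: add.commute)
    also have "\<dots> = 1 + (\<Sum>k\<in>{2..Suc m}. 1 / (real k)\<^sup>2)"
      by (subst sum.atLeast_Suc_atMost) (simp_all add: numeral_2_eq_2)
    finally show ?thesis by simp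
  qed
  have "(\<lambda>m. \<Sum>k\<in>{2..Suc m}. 1 / (real k)\<^sup>2) \<longlonglongrightarrow> pi\<^sup>2 / 6 - 1"
    unfolding shift by (intro tendsto_diff LIMSEQ_Suc[OF partial] tendsto_const)
  then show ?thesis by (rule LIMSEQ_imp_Suc)
qed

lemma dsf_T_t_power_normalized:
  assumes N: "1 \<le> N" and c: "dsf_valid N c" and m: "1 \<le> dsf_empty_count N c"
  shows "(\<integral>\<omega>. dsf_T N c \<omega> * dsf_t N c \<omega> ^ p \<partial>dsf_space N) / real N ^ (p + 1)
    = fact p * (\<Sum>k\<in>{2..dsf_empty_count N c}. 1 / (real k)\<^sup>2) + fact (Suc p)"
  using N m
  by (simp add: dsf_T_t_power_expectation[OF N c] Tt_moment_def t_moment_def time_to_last_step_def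
      field_simps)

lemma dsf_T_mean_mult_t_power_mean_normalized:
  assumes N: "1 \<le> N" and c: "dsf_valid N c" and m: "1 \<le> dsf_empty_count N c"
  shows "(\<integral>\<omega>. dsf_T N c \<omega> \<partial>dsf_space N) * (\<integral>\<omega>. dsf_t N c \<omega> ^ p \<partial>dsf_space N) / real N ^ (p + 1)
    = fact p * ((\<Sum>k\<in>{2..dsf_empty_count N c}. 1 / (real k)\<^sup>2) + 1)"
  using N m dsf_T_t_power_expectation[OF N c, of 0]
  by (simp add: dsf_t_power_expectation[OF N c] Tt_moment_def t_moment_def time_to_last_step_def
      field_simps)

theorem mainTheorem8:
  fixes m0 :: "nat \<Rightarrow> nat" and c :: "nat \<Rightarrow> dsf_config" and p :: nat
  assumes valid: "\<And>N. dsf_valid N (c N)"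
    and empty: "\<And>N. dsf_empty_count N (c N) = m0 N"
    and m0_inf: "filterlim m0 at_top sequentially"
    and p: "p \<ge> 1"
  shows "((\<lambda>N. (\<integral>\<omega>. dsf_T N (c N) \<omega> * dsf_t N (c N) \<omega> ^ p \<partial>dsf_space N) / real N ^ (p + 1))
           \<longlonglongrightarrow> fact p * pi\<^sup>2 / 6 + real p * fact p)
       \<and> ((\<lambda>N. (\<integral>\<omega>. dsf_T N (c N) \<omega> \<partial>dsf_space N) * (\<integral>\<omega>. dsf_t N (c N) \<omega> ^ p \<partial>dsf_space N)
              / real N ^ (p + 1))
           \<longlonglongrightarrow> fact p * pi\<^sup>2 / 6)"
proof -
  let ?S = "\<lambda>N. \<Sum>k\<in>{2..m0 N}. 1 / (real k)\<^sup>2"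
  have S: "?S \<longlonglongrightarrow> pi\<^sup>2 / 6 - 1"
    using filterlim_compose[OF tendsto_inv_sq_sum_from_two m0_inf] by simp
  have ev: "\<forall>\<^sub>F N in sequentially. 1 \<le> N \<and> 1 \<le> m0 N"
    using eventually_ge_at_top m0_inf by (auto simp: filterlim_at_top intro: eventually_conj)
  have T_t: "\<forall>\<^sub>F N in sequentially. fact p * ?S N + fact (Suc p)
      = (\<integral>\<omega>. dsf_T N (c N) \<omega> * dsf_t N (c N) \<omega> ^ p \<partial>dsf_space N) / real N ^ (p + 1)"
    using ev by eventually_elim (use dsf_T_t_power_normalized valid empty in simp)
  have T_and_t: "\<forall>\<^sub>F N in sequentially. fact p * (?S N + 1)
      = (\<integral>\<omega>. dsf_T N (c N) \<omega> \<partial>dsf_space N) * (\<integral>\<omega>. dsf_t N (c N) \<omega> ^ p \<partial>dsf_space N)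
        / real N ^ (p + 1)"
    using ev by eventually_elim (use dsf_T_mean_mult_t_power_mean_normalized valid empty in simp)
  have "(\<lambda>N. fact p * ?S N + fact (Suc p)) \<longlonglongrightarrow> fact p * (pi\<^sup>2 / 6 - 1) + fact (Suc p)"
    "(\<lambda>N. fact p * (?S N + 1)) \<longlonglongrightarrow> fact p * (pi\<^sup>2 / 6 - 1 + 1)"
    by (intro tendsto_intros S)+
  moreover have "fact p * (pi\<^sup>2 / 6 - 1) + fact (Suc p) = fact p * pi\<^sup>2 / 6 + real p * fact (p :: nat)"
    by (simp add: algebra_simps)
  ultimately show ?thesis
    using Lim_transform_eventually[OF _ T_t] Lim_transform_eventually[OF _ T_and_t] by simp
qed

end
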